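(* Let $(V_1,V_2)$ be a pair of commuting isometries on a Hilbert space $\mathcal H$ with $C(V_1,V_2)=0$ and $\ker (V_1V_2)^*\neq\{0\}$. Let $(\mathcal E,P,U)$ be the BCL triple for $(V_1,V_2)$ with associated functions $\varphi_1,\varphi_2$, and let $U_1=U|_{\operatorname{ran}P}$, $U_2=U|_{\operatorname{ran}P^\perp}$ (these subspaces reduce $U$). Then for $z\in\mathbb D$, $$\sigma(\varphi_1(z),\varphi_2(z))=\begin{cases}\{(z\overline{\lambda},\lambda):\lambda\in\sigma(U_1)\}&\text{if }V_2\text{ is a unitary},\\ \{(\overline{\mu},z\mu):\mu\in\sigma(U_2)\}&\text{if }V_1\text{ is a unitary},\\ \{(z\overline\lambda,\lambda),(\overline\mu,z\mu):\lambda\in\sigma(U_1),\ \mu\in\sigma(U_2)\}&\text{otherwise.}\end{cases}$$ For every point $(z_1,z_2)$ in this joint spectrum, the non-singularity of the Koszul complex of $(\varphi_1(z)-z_1I,\varphi_2(z)-z_2I)$ breaks at stage 3.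
   Context: Defect operator: $C(V_1,V_2)=I-V_1V_1^*-V_2V_2^*+V_1V_2V_2^*V_1^*$. Given a Hilbert space $\mathcal E$, a projection $P$ and unitary $U$ on $\mathcal E$, set $P^\perp=I-P$, $\varphi_1(z)=U^*(P^\perp+zP)$, $\varphi_2(z)=(P+zP^\perp)U$ ($z\in\mathbb D$). Berger–Coburn–Lebow theorem: for commuting isometries $(V_1,V_2)$ on $\mathcal H$, $\mathcal H=\mathcal H_p\oplus\mathcal H_u$ (jointly reducing), $V_i|_{\mathcal H_u}$ commuting unitaries, and there is a triple $(\mathcal E,P,U)$, unique up to unitary equivalence, with $(V_1|_{\mathcal H_p},V_2|_{\mathcal H_p})$ unitarily equal to the multiplication operators $(M_{\varphi_1},M_{\varphi_2})$ on the Hardy space $H^2_{\mathbb D}(\mathcal E)$ ($\mathcal E\cong\ker(V_1V_2)^*$); this is the BCL triple. Koszul complex of commuting $T_1,T_2$ on $\mathcal H$: $0\to\mathcal H\xrightarrow{\delta_1}\mathcal H\oplus\mathcal H\xrightarrow{\delta_2}\mathcal H\to0$, $\delta_1h=(T_1h,T_2h)$, $\delta_2(h_1,h_2)=T_1h_2-T_2h_1$; $\sigma(T_1,T_2)$ is the Taylor joint spectrum (points where the complex of $(T_1-\lambda_1,T_2-\lambda_2)$ is not exact); breaking at stage 3 means $\operatorname{ran}(T_1-\lambda_1)+\operatorname{ran}(T_2-\lambda_2)\neq\mathcal H$. *)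

theory Defs
  imports "HOL-Analysis.Analysis"
begin

class complex_inner = real_normed_vector +
  fixes scaleC :: "complex \<Rightarrow> 'a \<Rightarrow> 'a" (infixr \<open>*\<^sub>C\<close> 75)
    and cinner :: "'a \<Rightarrow> 'a \<Rightarrow> complex"
  assumes scaleC_add_right: "a *\<^sub>C (x + y) = a *\<^sub>C x + a *\<^sub>C y"
    and scaleC_add_left: "(a + b) *\<^sub>C x = a *\<^sub>C x + b *\<^sub>C x"
    and scaleC_scaleC: "a *\<^sub>C (b *\<^sub>C x) = (a * b) *\<^sub>C x"
    and scaleC_one: "1 *\<^sub>C x = x"
    and scaleC_of_real: "complex_of_real r *\<^sub>C x = r *\<^sub>R x"
    and cinner_cnj_commute: "cinner x y = cnj (cinner y x)"
    and cinner_add_left: "cinner (x + y) z = cinner x z + cinner y z"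
    and cinner_scaleC_left: "cinner (a *\<^sub>C x) y = a * cinner x y"
    and cinner_norm: "cinner x x = complex_of_real ((norm x)\<^sup>2)"

class complex_hilbert = complex_inner + complete_space

text \<open>Consistency check: the complex numbers form a complex Hilbert space.\<close>
instantiation complex :: complex_inner
begin
definition scaleC_complex :: "complex \<Rightarrow> complex \<Rightarrow> complex" where
  "scaleC_complex a x = a * x"
definition cinner_complex :: "complex \<Rightarrow> complex \<Rightarrow> complex" where
  "cinner_complex x y = x * cnj y"
instance
proof
  fix a b :: complex and x y z :: complex and r :: real
  show "a *\<^sub>C (x + y) = a *\<^sub>C x + a *\<^sub>C y"
    by (simp add: scaleC_complex_def distrib_left)
  show "(a + b) *\<^sub>C x = a *\<^sub>C x + b *\<^sub>C x"
    by (simp add: scaleC_complex_def distrib_right)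
  show "a *\<^sub>C (b *\<^sub>C x) = (a * b) *\<^sub>C x"
    by (simp add: scaleC_complex_def mult.assoc)
  show "1 *\<^sub>C x = x"
    by (simp add: scaleC_complex_def)
  show "complex_of_real r *\<^sub>C x = r *\<^sub>R x"
    by (simp add: scaleC_complex_def scaleR_conv_of_real)
  show "cinner x y = cnj (cinner y x)"
    by (simp add: cinner_complex_def mult.commute)
  show "cinner (x + y) z = cinner x z + cinner y z"
    by (simp add: cinner_complex_def distrib_right)
  show "cinner (a *\<^sub>C x) y = a * cinner x y"
    by (simp add: cinner_complex_def scaleC_complex_def mult.assoc)
  show "cinner x x = complex_of_real ((norm x)\<^sup>2)"
    by (simp only: cinner_complex_def complex_norm_square)
qed
end

instance complex :: complex_hilbert ..

definition bounded_clinear :: "('a::complex_inner \<Rightarrow> 'b::complex_inner) \<Rightarrow> bool" where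
  "bounded_clinear T \<longleftrightarrow> (\<forall>x y. T (x + y) = T x + T y) \<and> (\<forall>c x. T (c *\<^sub>C x) = c *\<^sub>C T x)
     \<and> (\<exists>K. \<forall>x. norm (T x) \<le> norm x * K)"

text \<open>Hilbert-space adjoint (exists uniquely for bounded operators by Riesz).\<close>
definition cadjoint :: "('a::complex_inner \<Rightarrow> 'a) \<Rightarrow> 'a \<Rightarrow> 'a" where
  "cadjoint T = (SOME S. \<forall>x y. cinner (T x) y = cinner x (S y))"

definition isometry :: "('a::complex_inner \<Rightarrow> 'a) \<Rightarrow> bool" where
  "isometry V \<longleftrightarrow> bounded_clinear V \<and> (\<forall>x. norm (V x) = norm x)"

definition unitary :: "('a::complex_inner \<Rightarrow> 'a) \<Rightarrow> bool" where
  "unitary U \<longleftrightarrow> isometry U \<and> surj U"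

definition projection :: "('a::complex_inner \<Rightarrow> 'a) \<Rightarrow> bool" where
  "projection P \<longleftrightarrow> bounded_clinear P \<and> P \<circ> P = P \<and> cadjoint P = P"

definition defect :: "('a::complex_inner \<Rightarrow> 'a) \<Rightarrow> ('a \<Rightarrow> 'a) \<Rightarrow> 'a \<Rightarrow> 'a" where
  "defect V1 V2 = (\<lambda>x. x - V1 (cadjoint V1 x) - V2 (cadjoint V2 x)
                      + V1 (V2 (cadjoint V2 (cadjoint V1 x))))"

definition csubspace :: "'a::complex_inner set \<Rightarrow> bool" where
  "csubspace S \<longleftrightarrow> 0 \<in> S \<and> (\<forall>x\<in>S. \<forall>y\<in>S. x + y \<in> S) \<and> (\<forall>c. \<forall>x\<in>S. c *\<^sub>C x \<in> S)"

definition closed_csubspace :: "'a::complex_inner set \<Rightarrow> bool" where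
  "closed_csubspace S \<longleftrightarrow> csubspace S \<and> closed S"

definition reduces :: "'a::complex_inner set \<Rightarrow> ('a \<Rightarrow> 'a) \<Rightarrow> bool" where
  "reduces S T \<longleftrightarrow> T ` S \<subseteq> S \<and> cadjoint T ` S \<subseteq> S"

definition spectrum_on :: "'a::complex_inner set \<Rightarrow> ('a \<Rightarrow> 'a) \<Rightarrow> complex set" where
  "spectrum_on S T = {l. \<not> (\<exists>R. (\<forall>x\<in>S. R x \<in> S)
        \<and> (\<forall>x\<in>S. R (T x - l *\<^sub>C x) = x \<and> T (R x) - l *\<^sub>C R x = x)
        \<and> (\<exists>K. \<forall>x\<in>S. norm (R x) \<le> K * norm x))}"

text \<open>Exactness of \<open>0 \<rightarrow> H \<rightarrow> H\<oplus>H \<rightarrow> H \<rightarrow> 0\<close>, \<open>\<delta>\<^sub>1 h = (A h, B h)\<close>,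
  \<open>\<delta>\<^sub>2 (h\<^sub>1,h\<^sub>2) = A h\<^sub>2 - B h\<^sub>1\<close>.\<close>
definition koszul_exact :: "('a::complex_inner \<Rightarrow> 'a) \<Rightarrow> ('a \<Rightarrow> 'a) \<Rightarrow> bool" where
  "koszul_exact A B \<longleftrightarrow>
     {h. (A h, B h) = (0, 0)} = {0}
   \<and> {(h1, h2). A h2 - B h1 = 0} = (\<lambda>h. (A h, B h)) ` UNIV
   \<and> (\<lambda>(h1, h2). A h2 - B h1) ` UNIV = UNIV"

definition taylor_spectrum :: "('a::complex_inner \<Rightarrow> 'a) \<Rightarrow> ('a \<Rightarrow> 'a) \<Rightarrow> (complex \<times> complex) set" where
  "taylor_spectrum T1 T2 =
     {(l1, l2). \<not> koszul_exact (\<lambda>x. T1 x - l1 *\<^sub>C x) (\<lambda>x. T2 x - l2 *\<^sub>C x)}"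

definition koszul_breaks_stage3 :: "('a::complex_inner \<Rightarrow> 'a) \<Rightarrow> ('a \<Rightarrow> 'a) \<Rightarrow> bool" where
  "koszul_breaks_stage3 A B \<longleftrightarrow> {A x + B y | x y. True} \<noteq> UNIV"

definition bcl_phi1 :: "('e::complex_inner \<Rightarrow> 'e) \<Rightarrow> ('e \<Rightarrow> 'e) \<Rightarrow> complex \<Rightarrow> 'e \<Rightarrow> 'e" where
  "bcl_phi1 P U z = (\<lambda>x. cadjoint U ((x - P x) + z *\<^sub>C P x))"

definition bcl_phi2 :: "('e::complex_inner \<Rightarrow> 'e) \<Rightarrow> ('e \<Rightarrow> 'e) \<Rightarrow> complex \<Rightarrow> 'e \<Rightarrow> 'e" where
  "bcl_phi2 P U z = (\<lambda>x. P (U x) + z *\<^sub>C (U x - P (U x)))"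

text \<open>Hardy space \<open>H\<^sup>2(E)\<close> given by its square-summable Taylor coefficient sequences;
  \<open>hardy_fun a\<close> is the \<open>E\<close>-valued function \<open>z \<mapsto> \<Sum> a\<^sub>n z\<^sup>n\<close> on the disc.\<close>
definition l2_seqs :: "(nat \<Rightarrow> 'e::complex_inner) set" where
  "l2_seqs = {a. summable (\<lambda>n. (norm (a n))\<^sup>2)}"

definition hardy_fun :: "(nat \<Rightarrow> 'e::complex_inner) \<Rightarrow> complex \<Rightarrow> 'e" where
  "hardy_fun a z = (\<Sum>n. (z ^ n) *\<^sub>C a n)"

text \<open>\<open>(\<E>,P,U)\<close> is a BCL triple for \<open>(V\<^sub>1,V\<^sub>2)\<close>: \<open>H = H\<^sub>p \<oplus> H\<^sub>u\<close> jointly reducing,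
  \<open>V\<^sub>i|H\<^sub>u\<close> unitary, and \<open>(V\<^sub>1|H\<^sub>p,V\<^sub>2|H\<^sub>p)\<close> unitarily equivalent to
  \<open>(M\<^sub>\<phi>\<^sub>1, M\<^sub>\<phi>\<^sub>2)\<close> on \<open>H\<^sup>2(\<E>)\<close>.\<close>
definition bcl_triple :: "('h::complex_hilbert \<Rightarrow> 'h) \<Rightarrow> ('h \<Rightarrow> 'h)
      \<Rightarrow> ('e::complex_hilbert \<Rightarrow> 'e) \<Rightarrow> ('e \<Rightarrow> 'e) \<Rightarrow> bool" where
  "bcl_triple V1 V2 P U \<longleftrightarrow> projection P \<and> unitary U \<and>
    (\<exists>Hp Hu W. closed_csubspace Hp \<and> closed_csubspace Hu
       \<and> (\<forall>x\<in>Hp. \<forall>y\<in>Hu. cinner x y = 0) \<and> (\<forall>h. \<exists>x\<in>Hp. \<exists>y\<in>Hu. h = x + y)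
       \<and> reduces Hp V1 \<and> reduces Hp V2 \<and> reduces Hu V1 \<and> reduces Hu V2
       \<and> V1 ` Hu = Hu \<and> V2 ` Hu = Hu
       \<and> bij_betw W Hp l2_seqs
       \<and> (\<forall>x\<in>Hp. \<forall>y\<in>Hp. W (x + y) = (\<lambda>n. W x n + W y n))
       \<and> (\<forall>c. \<forall>x\<in>Hp. W (c *\<^sub>C x) = (\<lambda>n. c *\<^sub>C W x n))
       \<and> (\<forall>x\<in>Hp. (\<Sum>n. (norm (W x n))\<^sup>2) = (norm x)\<^sup>2)
       \<and> (\<forall>x\<in>Hp. \<forall>z. norm z < 1 \<longrightarrow>
            hardy_fun (W (V1 x)) z = bcl_phi1 P U z (hardy_fun (W x) z)
          \<and> hardy_fun (W (V2 x)) z = bcl_phi2 P U z (hardy_fun (W x) z)))"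

end

theory Submission
  imports Defs
begin

(* Vanishing of the defect, tested on the constants of the Hardy model, gives
   |P U e| = |P e| for all e, hence P U = U P.  So ran P and ran P^perp reduce U, and
   phi1(z) = z U1^* + U2^*, phi2(z) = U1 + z U2 blockwise.  On each block the shifted
   symbols A = phi1(z) - z1, B = phi2(z) - z2 are functions of a single unitary: away from
   the curves (z conj l, l), l in sigma(U1), and (conj m, z m), m in sigma(U2), a Bezout
   identity X A + Y B = I with X, Y commuting with U and U^* makes the Koszul complex
   exact; on the curves, ran A + ran B lies in ran (U1 - l) (resp. ran (U2 - m)), which is
   a proper subspace.  If V2 (resp. V1) is unitary, the model forces P = I (resp. P = 0),
   so one of the blocks is trivial. *)

section \<open>Complex inner product spaces\<close>

lemma scaleC_zero_left [simp]: "(0::complex) *\<^sub>C (x::'a::complex_inner) = 0"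
  using scaleC_of_real[of 0 x] by simp

lemma scaleC_zero_right [simp]: "c *\<^sub>C (0::'a::complex_inner) = 0"
  using scaleC_add_right[of c "0::'a" 0] by simp

lemma scaleC_minus_left: "(- c) *\<^sub>C (x::'a::complex_inner) = - (c *\<^sub>C x)"
  using scaleC_add_left[of "-c" c x] by (simp add: eq_neg_iff_add_eq_0)

lemma scaleC_minus_right: "c *\<^sub>C (- x::'a::complex_inner) = - (c *\<^sub>C x)"
  using scaleC_add_right[of c "-x" x] by (simp add: eq_neg_iff_add_eq_0)

lemma scaleC_diff_right: "c *\<^sub>C (x - y::'a::complex_inner) = c *\<^sub>C x - c *\<^sub>C y"
  using scaleC_add_right[of c x "-y"] by (simp add: scaleC_minus_right)

lemma scaleC_diff_left: "(a - b) *\<^sub>C (x::'a::complex_inner) = a *\<^sub>C x - b *\<^sub>C x"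
  using scaleC_add_left[of a "-b" x] by (simp add: scaleC_minus_left)

lemma scaleC_minus_one [simp]: "(-1) *\<^sub>C (x::'a::complex_inner) = - x"
  by (simp add: scaleC_minus_left scaleC_one)

lemma cinner_scaleC_right: "cinner x (c *\<^sub>C y) = cnj c * cinner (x::'a::complex_inner) y"
  by (subst cinner_cnj_commute) (simp add: cinner_scaleC_left cinner_cnj_commute[of y x])

lemma cinner_add_right: "cinner x (y + z) = cinner x y + cinner (x::'a::complex_inner) z"
  by (subst cinner_cnj_commute)
    (simp add: cinner_add_left cinner_cnj_commute[of y x] cinner_cnj_commute[of z x])

lemma cinner_zero_left [simp]: "cinner 0 (x::'a::complex_inner) = 0"
  using cinner_add_left[of 0 0 x] by simp

lemma cinner_zero_right [simp]: "cinner (x::'a::complex_inner) 0 = 0"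
  using cinner_add_right[of x 0 0] by simp

lemma cinner_diff_left: "cinner (x - y) (z::'a::complex_inner) = cinner x z - cinner y z"
  using cinner_add_left[of x "-y" z] cinner_scaleC_left[of "-1" y z] by simp

lemma cinner_diff_right: "cinner x (y - z::'a::complex_inner) = cinner x y - cinner x z"
  using cinner_add_right[of x y "-z"] cinner_scaleC_right[of x "-1" z] by simp

lemma cinner_self_eq_0 [simp]: "cinner x (x::'a::complex_inner) = 0 \<longleftrightarrow> x = 0"
  using cinner_norm[of x] by simp

lemma cinner_right_ext: "(\<And>y. cinner y x = cinner y (z::'a::complex_inner)) \<Longrightarrow> x = z"
  using cinner_self_eq_0[of "x - z"] by (simp add: cinner_diff_right)

lemma norm_scaleC: "norm (c *\<^sub>C (x::'a::complex_inner)) = cmod c * norm x"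
proof -
  have "complex_of_real ((norm (c *\<^sub>C x))\<^sup>2) = cinner (c *\<^sub>C x) (c *\<^sub>C x)"
    by (rule cinner_norm[symmetric])
  also have "\<dots> = (c * cnj c) * cinner x x"
    by (simp add: cinner_scaleC_left cinner_scaleC_right)
  also have "\<dots> = complex_of_real ((cmod c * norm x)\<^sup>2)"
    by (simp only: complex_norm_square[symmetric] cinner_norm of_real_mult[symmetric] power_mult_distrib)
  finally show ?thesis
    by (simp only: of_real_eq_iff power2_eq_iff_nonneg norm_ge_zero zero_le_mult_iff) simp
qed

lemma power2_norm_add:
  "(norm (x + y::'a::complex_inner))\<^sup>2 = (norm x)\<^sup>2 + (norm y)\<^sup>2 + 2 * Re (cinner x y)"
proof -
  have "complex_of_real ((norm (x + y))\<^sup>2) = cinner (x + y) (x + y)"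
    by (rule cinner_norm[symmetric])
  also have "\<dots> = cinner x x + cinner y y + (cinner x y + cnj (cinner x y))"
    by (simp add: cinner_add_left cinner_add_right cinner_cnj_commute[of y x])
  also have "cinner x y + cnj (cinner x y) = complex_of_real (2 * Re (cinner x y))"
    by (simp add: complex_add_cnj)
  finally show ?thesis
    by (simp only: cinner_norm of_real_add[symmetric] of_real_eq_iff)
qed

lemma cinner_minus_right: "cinner x (- y::'a::complex_inner) = - cinner x y"
  using cinner_add_right[of x "-y" y] by (simp add: eq_neg_iff_add_eq_0)

lemma power2_norm_diff:
  "(norm (x - y::'a::complex_inner))\<^sup>2 = (norm x)\<^sup>2 + (norm y)\<^sup>2 - 2 * Re (cinner x y)"
  using power2_norm_add[of x "-y"] by (simp add: cinner_minus_right)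

lemma parallelogram_law:
  "(norm (x + y::'a::complex_inner))\<^sup>2 + (norm (x - y))\<^sup>2 = 2 * (norm x)\<^sup>2 + 2 * (norm y)\<^sup>2"
  using power2_norm_add[of x y] power2_norm_diff[of x y] by simp

lemma complex_Cauchy_Schwarz: "cmod (cinner x y) \<le> norm x * norm (y::'a::complex_inner)"
proof (cases "y = 0")
  case False
  define t where "t = cinner x y / complex_of_real ((norm y)\<^sup>2)"
  have ny: "norm y > 0" using False by simp
  have "complex_of_real ((norm (x - t *\<^sub>C y))\<^sup>2) = cinner (x - t *\<^sub>C y) (x - t *\<^sub>C y)"
    by (rule cinner_norm[symmetric])
  also have "\<dots> = cinner x x - cnj t * cinner x y - t * cinner y x + t * cnj t * cinner y y"
    by (simp add: cinner_diff_left cinner_diff_right cinner_scaleC_left cinner_scaleC_right algebra_simps)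
  also have "\<dots> = complex_of_real ((norm x)\<^sup>2 - (cmod (cinner x y))\<^sup>2 / (norm y)\<^sup>2)"
  proof -
    have "cinner x y * cnj (cinner x y) = complex_of_real ((cmod (cinner x y))\<^sup>2)"
      by (rule complex_norm_square[symmetric])
    then show ?thesis
      using ny unfolding cinner_cnj_commute[of y x] t_def cinner_norm
      by (simp add: field_simps power2_eq_square)
  qed
  finally have "(norm (x - t *\<^sub>C y))\<^sup>2 = (norm x)\<^sup>2 - (cmod (cinner x y))\<^sup>2 / (norm y)\<^sup>2"
    by (simp only: of_real_eq_iff)
  then have "(cmod (cinner x y))\<^sup>2 / (norm y)\<^sup>2 \<le> (norm x)\<^sup>2"
    by (metis diff_ge_0_iff_ge zero_le_power2)
  then have "(cmod (cinner x y))\<^sup>2 \<le> (norm x * norm y)\<^sup>2"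
    using ny by (simp add: field_simps power_mult_distrib)
  then show ?thesis
    by (metis mult_nonneg_nonneg norm_ge_zero power2_le_imp_le)
qed simp

lemma csubspace_0: "csubspace S \<Longrightarrow> 0 \<in> S"
  and csubspace_add: "csubspace S \<Longrightarrow> x \<in> S \<Longrightarrow> y \<in> S \<Longrightarrow> x + y \<in> S"
  and csubspace_scaleC: "csubspace S \<Longrightarrow> x \<in> S \<Longrightarrow> c *\<^sub>C x \<in> S"
  unfolding csubspace_def by blast+

lemma csubspace_diff: "csubspace S \<Longrightarrow> x \<in> S \<Longrightarrow> y \<in> S \<Longrightarrow> x - y \<in> S"
  using csubspace_add[of S x "(-1) *\<^sub>C y"] csubspace_scaleC[of S y "-1"] by simp

lemma midpoint_distance_bound:
  fixes u a b :: "'a::complex_inner"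
  assumes "d \<le> (norm (u - (1/2::real) *\<^sub>R (a + b)))\<^sup>2"
  shows "(norm (a - b))\<^sup>2 \<le> 2 * (norm (u - a))\<^sup>2 + 2 * (norm (u - b))\<^sup>2 - 4 * d"
proof -
  have "u - (1/2::real) *\<^sub>R (a + b) = (1/2::real) *\<^sub>R ((u - a) + (u - b))"
    by (simp add: scaleR_add_right scaleR_diff_right flip: scaleR_add_left)
  with assms have "4 * d \<le> (norm ((u - a) + (u - b)))\<^sup>2"
    by (simp add: power_mult_distrib power_divide)
  moreover have "(norm ((u - a) + (u - b)))\<^sup>2 + (norm (a - b))\<^sup>2 = 2 * (norm (u - a))\<^sup>2 + 2 * (norm (u - b))\<^sup>2"
    using parallelogram_law[of "u - a" "u - b"] by (simp add: norm_minus_commute)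
  ultimately show ?thesis by linarith
qed

lemma Cauchy_if_square_dist_le:
  fixes x :: "nat \<Rightarrow> 'a::real_normed_vector"
  assumes near: "\<And>n k. (norm (x n - x k))\<^sup>2 \<le> 2 / (real n + 1) + 2 / (real k + 1)"
  shows "Cauchy x"
proof (rule metric_CauchyI)
  fix e :: real assume "0 < e"
  obtain N :: nat where N: "4 / e\<^sup>2 < real N" using reals_Archimedean2 by blast
  have "dist (x n) (x k) < e" if "N \<le> n" "N \<le> k" for n k
  proof -
    have "2 / (real n + 1) \<le> 2 / (real N + 1)" "2 / (real k + 1) \<le> 2 / (real N + 1)"
      using that by (simp_all add: frac_le)
    then have "(norm (x n - x k))\<^sup>2 \<le> 4 / (real N + 1)"
      using near[of n k] by linarith
    also have "\<dots> < e\<^sup>2"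
      using N \<open>0 < e\<close> by (simp add: field_simps add_pos_pos add.commute add_strict_increasing)
    finally show ?thesis
      using \<open>0 < e\<close> by (simp add: dist_norm power_less_imp_less_base)
  qed
  then show "\<exists>N. \<forall>n\<ge>N. \<forall>k\<ge>N. dist (x n) (x k) < e" by blast
qed

lemma closed_csubspace_nearest_point:
  fixes u :: "'a::complex_hilbert"
  assumes M: "csubspace M" and "closed M"
  obtains m where "m \<in> M" and "\<And>w. w \<in> M \<Longrightarrow> norm (u - m) \<le> norm (u - w)"
proof -
  define d where "d = Inf ((\<lambda>m. (norm (u - m))\<^sup>2) ` M)"
  have "M \<noteq> {}" using csubspace_0[OF M] by blast
  have d_le: "d \<le> (norm (u - m))\<^sup>2" if "m \<in> M" for m
    unfolding d_def by (rule cInf_lower) (use that in \<open>auto intro: bdd_belowI[of _ 0]\<close>)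
  have "\<exists>m\<in>M. (norm (u - m))\<^sup>2 < d + 1 / (real n + 1)" for n
    using cInf_lessD[of "(\<lambda>m. (norm (u - m))\<^sup>2) ` M" "d + 1 / (real n + 1)"] \<open>M \<noteq> {}\<close>
    by (auto simp: d_def)
  then obtain mm where mm_in: "\<And>n. mm n \<in> M"
    and mm_close: "\<And>n. (norm (u - mm n))\<^sup>2 < d + 1 / (real n + 1)"
    by metis
  have mm_near: "(norm (mm n - mm k))\<^sup>2 \<le> 2 / (real n + 1) + 2 / (real k + 1)" for n k
  proof -
    have half: "(1/2::complex) *\<^sub>C y = (1/2::real) *\<^sub>R y" for y :: 'a
      using scaleC_of_real[of "1/2" y] by simp
    have "(1/2::complex) *\<^sub>C (mm n + mm k) \<in> M"
      using M mm_in by (simp add: csubspace_add csubspace_scaleC)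
    then have "d \<le> (norm (u - (1/2::real) *\<^sub>R (mm n + mm k)))\<^sup>2"
      using d_le unfolding half by blast
    from midpoint_distance_bound[OF this] show ?thesis
      using mm_close[of n] mm_close[of k] by linarith
  qed
  have "Cauchy mm"
    using mm_near by (rule Cauchy_if_square_dist_le)
  then obtain m where lim: "mm \<longlonglongrightarrow> m"
    using Cauchy_convergent_iff convergent_def by blast
  have "m \<in> M" using closed_sequentially[OF \<open>closed M\<close>] mm_in lim by blast
  moreover have "(norm (u - m))\<^sup>2 \<le> d"
  proof (rule LIMSEQ_le)
    show "(\<lambda>n. (norm (u - mm n))\<^sup>2) \<longlonglongrightarrow> (norm (u - m))\<^sup>2"
      by (intro tendsto_intros lim)
    show "(\<lambda>n. d + 1 / (real n + 1)) \<longlonglongrightarrow> d"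
      using tendsto_add[OF tendsto_const[of d] LIMSEQ_inverse_real_of_nat]
      by (simp add: inverse_eq_divide add.commute)
    show "\<exists>N. \<forall>n\<ge>N. (norm (u - mm n))\<^sup>2 \<le> d + 1 / (real n + 1)"
      using mm_close less_imp_le by blast
  qed
  ultimately show ?thesis
    using that d_le by (meson norm_ge_zero order_trans power2_le_imp_le)
qed

lemma nearest_point_orthogonal:
  fixes u :: "'a::complex_inner"
  assumes M: "csubspace M" and "m \<in> M" and nearest: "\<And>w. w \<in> M \<Longrightarrow> norm (u - m) \<le> norm (u - w)"
    and "w \<in> M"
  shows "cinner (u - m) w = 0"
proof -
  define v where "v = u - m"
  define a where "a = cinner v w"
  define s where "s = 1 / ((norm w)\<^sup>2 + 1)"
  have s: "0 < s" "s * (norm w)\<^sup>2 \<le> 1"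
    unfolding s_def by (simp_all add: add_nonneg_pos divide_le_eq_1)
  have "m + (complex_of_real s * a) *\<^sub>C w \<in> M"
    using M \<open>m \<in> M\<close> \<open>w \<in> M\<close> by (simp add: csubspace_add csubspace_scaleC)
  from nearest[OF this] have "norm v \<le> norm (v - (complex_of_real s * a) *\<^sub>C w)"
    by (simp add: v_def diff_diff_eq)
  then have "(norm v)\<^sup>2 \<le> (norm (v - (complex_of_real s * a) *\<^sub>C w))\<^sup>2"
    by (rule power_mono) simp
  also have "\<dots> = (norm v)\<^sup>2 + (norm ((complex_of_real s * a) *\<^sub>C w))\<^sup>2
      - 2 * Re (cinner v ((complex_of_real s * a) *\<^sub>C w))"
    by (rule power2_norm_diff)
  also have "cinner v ((complex_of_real s * a) *\<^sub>C w) = complex_of_real (s * (cmod a)\<^sup>2)"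
    using complex_norm_square[of a] by (simp add: cinner_scaleC_right a_def mult.commute)
  also have "norm ((complex_of_real s * a) *\<^sub>C w) = s * cmod a * norm w"
    using s by (simp add: norm_scaleC norm_mult)
  finally have "2 * s * (cmod a)\<^sup>2 \<le> s * (cmod a)\<^sup>2 * (s * (norm w)\<^sup>2)"
    by (simp add: power_mult_distrib power2_eq_square algebra_simps)
  also have "\<dots> \<le> s * (cmod a)\<^sup>2"
    using s by (simp add: mult_left_le)
  finally show ?thesis
    using s by (simp add: a_def v_def)
qed

lemma riesz_representation:
  fixes f :: "'a::complex_hilbert \<Rightarrow> complex"
  assumes add: "\<And>x y. f (x + y) = f x + f y" and scale: "\<And>c x. f (c *\<^sub>C x) = c * f x"
    and bounded: "\<And>x. cmod (f x) \<le> norm x * K"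
  obtains r where "\<And>x. f x = cinner x r"
proof (cases "\<forall>x. f x = 0")
  case True
  then show ?thesis using that[of 0] by simp
next
  case False
  then obtain u where fu: "f u \<noteq> 0" by blast
  define M where "M = {x. f x = 0}"
  have diff: "f (x - y) = f x - f y" for x y
    using add[of x "(-1) *\<^sub>C y"] scale[of "-1" y] by simp
  have "bounded_linear f"
    by (rule bounded_linear_intro[OF add _ bounded])
      (use scale[of "complex_of_real _"] in \<open>simp add: scaleC_of_real scaleR_conv_of_real\<close>)
  then have "closed M"
    unfolding M_def by (intro closed_Collect_eq linear_continuous_on continuous_on_const)
  moreover have M: "csubspace M"
    using add scale scale[of 0 0] by (simp add: M_def csubspace_def)
  ultimately obtain m where m: "m \<in> M" and nearest: "\<And>w. w \<in> M \<Longrightarrow> norm (u - m) \<le> norm (u - w)"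
    by (metis closed_csubspace_nearest_point)
  define v where "v = u - m"
  have fv: "f v = f u" using m by (simp add: v_def diff M_def)
  then have "v \<noteq> 0" using fu scale[of 0 0] by auto
  show ?thesis
  proof (rule that)
    fix x
    have "x - (f x / f v) *\<^sub>C v \<in> M"
      using fu fv by (simp add: M_def diff scale)
    then have "cinner v (x - (f x / f v) *\<^sub>C v) = 0"
      using nearest_point_orthogonal[OF M m nearest] unfolding v_def by blast
    then have "cinner v x = cnj (f x / f v) * complex_of_real ((norm v)\<^sup>2)"
      by (simp add: cinner_diff_right cinner_scaleC_right cinner_norm)
    then have "cinner x v = (f x / f v) * complex_of_real ((norm v)\<^sup>2)"
      by (subst cinner_cnj_commute) simp
    then show "f x = cinner x ((cnj (f v) / complex_of_real ((norm v)\<^sup>2)) *\<^sub>C v)"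
      using fu fv \<open>v \<noteq> 0\<close> by (simp add: cinner_scaleC_right field_simps)
  qed
qed

section \<open>Bounded operators, adjoints, unitaries and projections\<close>

lemma bounded_clinear_add: "bounded_clinear T \<Longrightarrow> T (x + y) = T x + T y"
  and bounded_clinear_scaleC: "bounded_clinear T \<Longrightarrow> T (c *\<^sub>C x) = c *\<^sub>C T x"
  by (simp_all add: bounded_clinear_def)

lemma bounded_clinear_zero:
  "bounded_clinear (T::'a::complex_inner \<Rightarrow> 'b::complex_inner) \<Longrightarrow> T 0 = 0"
  using bounded_clinear_scaleC[of T 0 0] by simp

lemma bounded_clinear_diff:
  "bounded_clinear (T::'a::complex_inner \<Rightarrow> 'b::complex_inner) \<Longrightarrow> T (x - y) = T x - T y"
  using bounded_clinear_add[of T x "(-1) *\<^sub>C y"] bounded_clinear_scaleC[of T "-1" y] by simp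

lemma bounded_clinear_bounded_linear:
  assumes "bounded_clinear (T::'a::complex_inner \<Rightarrow> 'b::complex_inner)"
  shows "bounded_linear T"
proof -
  obtain K where K: "\<And>x. norm (T x) \<le> norm x * K"
    using assms by (auto simp: bounded_clinear_def)
  show ?thesis
  proof (rule bounded_linear_intro[OF _ _ K])
    show "T (x + y) = T x + T y" for x y
      using assms by (rule bounded_clinear_add)
    show "T (r *\<^sub>R x) = r *\<^sub>R T x" for r x
      using bounded_clinear_scaleC[OF assms, of "complex_of_real r" x] by (simp add: scaleC_of_real)
  qed
qed

lemma cadjoint_exists:
  fixes T :: "'a::complex_hilbert \<Rightarrow> 'a"
  assumes "bounded_clinear T"
  shows "\<exists>S. \<forall>x y. cinner (T x) y = cinner x (S y)"
proof -
  obtain K where K: "\<And>x. norm (T x) \<le> norm x * K"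
    using assms by (auto simp: bounded_clinear_def)
  have "\<exists>r. \<forall>x. cinner (T x) y = cinner x r" for y
  proof -
    have "\<And>x1 x2. cinner (T (x1 + x2)) y = cinner (T x1) y + cinner (T x2) y"
      by (simp add: bounded_clinear_add[OF assms] cinner_add_left)
    moreover have "\<And>c x. cinner (T (c *\<^sub>C x)) y = c * cinner (T x) y"
      by (simp add: bounded_clinear_scaleC[OF assms] cinner_scaleC_left)
    moreover have "\<And>x. cmod (cinner (T x) y) \<le> norm x * (K * norm y)"
      using complex_Cauchy_Schwarz K
      by (smt (verit) mult.assoc mult_right_mono norm_ge_zero)
    ultimately obtain r where "\<And>x. cinner (T x) y = cinner x r"
      by (rule riesz_representation) blast
    then show ?thesis by blast
  qed
  then show ?thesis by metis
qed

lemma cinner_cadjoint_right: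
  fixes T :: "'a::complex_hilbert \<Rightarrow> 'a"
  assumes "bounded_clinear T"
  shows "cinner (T x) y = cinner x (cadjoint T y)"
  using someI_ex[OF cadjoint_exists[OF assms]] unfolding cadjoint_def by blast

lemma cinner_cadjoint_left:
  fixes T :: "'a::complex_hilbert \<Rightarrow> 'a"
  assumes "bounded_clinear T"
  shows "cinner (cadjoint T y) x = cinner y (T x)"
  using cinner_cadjoint_right[OF assms, of x y] by (metis cinner_cnj_commute)

lemma isometry_bounded_clinear: "isometry V \<Longrightarrow> bounded_clinear V"
  and norm_isometry: "isometry V \<Longrightarrow> norm (V x) = norm x"
  by (simp_all add: isometry_def)

lemma isometry_cinner:
  assumes V: "isometry (V::'a::complex_inner \<Rightarrow> 'a)"
  shows "cinner (V x) (V y) = cinner x y"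
proof -
  note linear = bounded_clinear_add[OF isometry_bounded_clinear[OF V]]
    bounded_clinear_scaleC[OF isometry_bounded_clinear[OF V]]
  have re: "Re (cinner (V x) (V y)) = Re (cinner x y)" for x y
    using norm_isometry[OF V, of "x + y"] power2_norm_add[of "V x" "V y"] power2_norm_add[of x y]
    by (simp add: linear norm_isometry[OF V])
  have "Im (cinner (V x) (V y)) = Im (cinner x y)"
    using re[of x "\<i> *\<^sub>C y"] by (simp add: linear cinner_scaleC_right)
  with re[of x y] show ?thesis by (simp add: complex_eqI)
qed

context
  fixes U :: "'a::complex_hilbert \<Rightarrow> 'a"
  assumes U: "unitary U"
begin

lemma unitary_bounded_clinear: "bounded_clinear U"
  and norm_unitary: "norm (U x) = norm x"
  using U by (simp_all add: unitary_def isometry_def)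

lemma cadjoint_unitary_cancel [simp]: "cadjoint U (U x) = x"
proof (rule cinner_right_ext)
  fix y
  have "cinner y (cadjoint U (U x)) = cinner (U y) (U x)"
    by (rule cinner_cadjoint_right[OF unitary_bounded_clinear, symmetric])
  also have "\<dots> = cinner y x"
    using U unfolding unitary_def by (blast intro: isometry_cinner)
  finally show "cinner y (cadjoint U (U x)) = cinner y x" .
qed

lemma unitary_cadjoint_cancel [simp]: "U (cadjoint U x) = x"
proof -
  obtain w where "x = U w" using U unfolding unitary_def by blast
  then show ?thesis by simp
qed

lemma norm_cadjoint_unitary: "norm (cadjoint U x) = norm x"
  using norm_unitary[of "cadjoint U x"] by simp

lemma cadjoint_unitary_bounded_clinear: "bounded_clinear (cadjoint U)"
  unfolding bounded_clinear_def
proof (intro conjI allI exI)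
  fix x y :: 'a and c :: complex
  have "cadjoint U (x + y) = cadjoint U (U (cadjoint U x) + U (cadjoint U y))"
    by simp
  then show "cadjoint U (x + y) = cadjoint U x + cadjoint U y"
    by (simp only: bounded_clinear_add[OF unitary_bounded_clinear, symmetric] cadjoint_unitary_cancel)
  have "cadjoint U (c *\<^sub>C x) = cadjoint U (c *\<^sub>C U (cadjoint U x))"
    by simp
  then show "cadjoint U (c *\<^sub>C x) = c *\<^sub>C cadjoint U x"
    by (simp only: bounded_clinear_scaleC[OF unitary_bounded_clinear, symmetric] cadjoint_unitary_cancel)
  show "norm (cadjoint U x) \<le> norm x * 1"
    by (simp add: norm_cadjoint_unitary)
qed

end

context
  fixes P :: "'a::complex_hilbert \<Rightarrow> 'a"
  assumes P: "projection P"
begin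

lemma projection_bounded_clinear: "bounded_clinear P"
  and projection_idem [simp]: "P (P x) = P x"
  using P by (simp_all add: projection_def fun_eq_iff)

lemma projection_selfadjoint: "cinner (P x) y = cinner x (P y)"
  using cinner_cadjoint_right[OF projection_bounded_clinear] P by (simp add: projection_def)

lemma projection_complement [simp]: "P (x - P x) = 0"
  by (simp add: bounded_clinear_diff[OF projection_bounded_clinear])

lemma power2_norm_projection: "(norm x)\<^sup>2 = (norm (P x))\<^sup>2 + (norm (x - P x))\<^sup>2"
  using power2_norm_add[of "P x" "x - P x"]
  by (simp add: projection_selfadjoint[of _ "x - P x"])

end

lemma projection_commutes_with_unitary:
  fixes P U :: "'e::complex_hilbert \<Rightarrow> 'e"
  assumes P: "projection P" and U: "unitary U"
    and ker_U: "\<And>f. P f = 0 \<Longrightarrow> P (U f) = 0"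
    and ker_cadjoint_U: "\<And>f. P f = 0 \<Longrightarrow> P (cadjoint U f) = 0"
  shows "P (U e) = U (P e)"
proof -
  \<comment> \<open>\<open>U\<^sup>*\<close> preserves \<open>ker P\<close>, so \<open>U\<close> preserves \<open>ran P = (ker P)\<^sup>\<bottom>\<close>.\<close>
  note P_linear = bounded_clinear_add[OF projection_bounded_clinear[OF P]]
    bounded_clinear_diff[OF projection_bounded_clinear[OF P]]
  define g where "g = U (P e) - P (U (P e))"
  have "P g = 0"
    by (simp add: g_def projection_complement[OF P])
  have "cinner g g = cinner (U (P e)) g - cinner (P (U (P e))) g"
    by (simp add: g_def cinner_diff_left)
  also have "cinner (P (U (P e))) g = 0"
    by (simp add: projection_selfadjoint[OF P] \<open>P g = 0\<close>)
  also have "cinner (U (P e)) g = cinner (P e) (cadjoint U g)"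
    by (rule cinner_cadjoint_right[OF unitary_bounded_clinear[OF U]])
  also have "\<dots> = 0"
    by (simp add: projection_selfadjoint[OF P] ker_cadjoint_U[OF \<open>P g = 0\<close>])
  finally have "P (U (P e)) = U (P e)"
    by (simp add: g_def)
  moreover have "P (U (e - P e)) = 0"
    by (rule ker_U) (simp add: projection_complement[OF P])
  ultimately show ?thesis
    by (simp add: bounded_clinear_diff[OF unitary_bounded_clinear[OF U]] P_linear)
qed

section \<open>Uniform boundedness\<close>

lemma norm_diff_le_geometric:
  fixes x :: "nat \<Rightarrow> 'a::real_normed_vector" and c :: real
  assumes step: "\<And>n. norm (x (Suc n) - x n) \<le> c ^ n" and "c < 1" and "n \<le> m"
  shows "norm (x m - x n) \<le> (c ^ n - c ^ m) / (1 - c)"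
  using \<open>n \<le> m\<close>
proof (induction m)
  case (Suc m)
  show ?case
  proof (cases "n = Suc m")
    case False
    then have "norm (x (Suc m) - x n) \<le> c ^ m + (c ^ n - c ^ m) / (1 - c)"
      using Suc norm_triangle_ineq[of "x (Suc m) - x m" "x m - x n"] step[of m] by simp
    also have "\<dots> = (c ^ n - c ^ Suc m) / (1 - c)"
      using \<open>c < 1\<close> by (simp add: field_simps)
    finally show ?thesis .
  qed simp
qed simp

lemma geometric_increments_convergent:
  fixes x :: "nat \<Rightarrow> 'a::{real_normed_vector, complete_space}" and c :: real
  assumes step: "\<And>n. norm (x (Suc n) - x n) \<le> c ^ n" and "0 \<le> c" "c < 1"
  obtains y where "x \<longlonglongrightarrow> y" and "\<And>n. norm (y - x n) \<le> c ^ n / (1 - c)"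
proof -
  have bound: "norm (x m - x n) \<le> c ^ N / (1 - c)" if "N \<le> n" "n \<le> m" for m n N
  proof -
    have "norm (x m - x n) \<le> (c ^ n - c ^ m) / (1 - c)"
      by (rule norm_diff_le_geometric[OF step \<open>c < 1\<close> \<open>n \<le> m\<close>])
    also have "\<dots> \<le> c ^ N / (1 - c)"
      using power_decreasing[OF that(1) \<open>0 \<le> c\<close>] zero_le_power[OF \<open>0 \<le> c\<close>, of m] \<open>c < 1\<close>
      by (intro divide_right_mono) simp_all
    finally show ?thesis .
  qed
  have near: "dist (x m) (x n) \<le> c ^ N / (1 - c)" if "N \<le> m" "N \<le> n" for m n N
    using bound[of N n m] bound[of N m n] that
    by (cases "n \<le> m") (simp_all add: dist_norm norm_minus_commute)
  have "Cauchy x"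
  proof (rule metric_CauchyI)
    fix e :: real assume "0 < e"
    then obtain N where "c ^ N < e * (1 - c)"
      using real_arch_pow_inv[of "e * (1 - c)" c] \<open>c < 1\<close> by auto
    then have "c ^ N / (1 - c) < e"
      using \<open>c < 1\<close> by (simp add: pos_divide_less_eq)
    then show "\<exists>N. \<forall>m\<ge>N. \<forall>n\<ge>N. dist (x m) (x n) < e"
      using near by (meson order_le_less_trans)
  qed
  then obtain y where lim: "x \<longlonglongrightarrow> y"
    using Cauchy_convergent_iff convergent_def by blast
  moreover have "norm (y - x n) \<le> c ^ n / (1 - c)" for n
  proof (rule LIMSEQ_le_const2)
    show "(\<lambda>m. norm (x m - x n)) \<longlonglongrightarrow> norm (y - x n)"
      by (intro tendsto_intros lim)
    show "\<exists>N. \<forall>m\<ge>N. norm (x m - x n) \<le> c ^ n / (1 - c)"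
      using bound[of n n] by blast
  qed
  ultimately show ?thesis using that by blast
qed

lemma exists_cinner_ge_on_sphere:
  fixes p w :: "'a::complex_inner"
  assumes S: "csubspace S" and "p \<in> S" "w \<in> S" "w \<noteq> 0" "0 \<le> r"
  obtains q where "q \<in> S" "norm (q - p) = r" "r * norm w \<le> cmod (cinner q w)"
proof -
  define u where "u = complex_of_real (r / norm w) *\<^sub>C w"
  have "u \<in> S" using S \<open>w \<in> S\<close> by (simp add: u_def csubspace_scaleC)
  have "norm u = r"
    using \<open>w \<noteq> 0\<close> \<open>0 \<le> r\<close> by (simp add: u_def norm_scaleC norm_divide)
  have "cinner u w = complex_of_real (r * norm w)"
    using \<open>w \<noteq> 0\<close> by (simp add: u_def cinner_scaleC_left cinner_norm power2_eq_square)
  then have "2 * (r * norm w) = cmod (cinner (p + u) w - cinner (p - u) w)"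
    using \<open>0 \<le> r\<close> by (simp add: cinner_add_left cinner_diff_left norm_mult)
  also have "\<dots> \<le> cmod (cinner (p + u) w) + cmod (cinner (p - u) w)"
    by (rule norm_triangle_ineq4)
  finally consider "r * norm w \<le> cmod (cinner (p + u) w)" | "r * norm w \<le> cmod (cinner (p - u) w)"
    by linarith
  then show ?thesis
  proof cases
    case 1
    show ?thesis
      by (rule that[of "p + u"]) (use 1 S \<open>p \<in> S\<close> \<open>u \<in> S\<close> \<open>norm u = r\<close> in \<open>simp_all add: csubspace_add\<close>)
  next
    case 2
    show ?thesis
      by (rule that[of "p - u"]) (use 2 S \<open>p \<in> S\<close> \<open>u \<in> S\<close> \<open>norm u = r\<close> in \<open>simp_all add: csubspace_diff\<close>)
  qed
qed

text \<open>The gliding hump: \<open>y\<close> is the limit of a walk with geometrically shrinking steps,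
  each step chosen to make the pairing with the next \<open>w k\<close> large.\<close>

lemma gliding_hump:
  fixes w :: "nat \<Rightarrow> 'a::complex_hilbert"
  assumes S: "csubspace S" "closed S" and w: "\<And>k. w k \<in> S" "\<And>k. w k \<noteq> 0"
  obtains y where "y \<in> S" and "\<And>k. (1/3) ^ k * norm (w k) / 2 \<le> cmod (cinner y (w k))"
proof -
  have "\<exists>x. \<forall>n. x n \<in> S \<and> (norm (x (Suc n) - x n) = (1/3) ^ n
          \<and> (1/3) ^ n * norm (w n) \<le> cmod (cinner (x (Suc n)) (w n)))"
  proof (rule dependent_nat_choice)
    show "\<exists>p. p \<in> S" using csubspace_0[OF S(1)] by blast
    fix p n assume "p \<in> S"
    obtain q where "q \<in> S" "norm (q - p) = (1/3) ^ n"
      "(1/3) ^ n * norm (w n) \<le> cmod (cinner q (w n))"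
      by (rule exists_cinner_ge_on_sphere[where r = "(1/3) ^ n", OF S(1) \<open>p \<in> S\<close> w]) auto
    then show "\<exists>q. q \<in> S \<and> norm (q - p) = (1/3) ^ n \<and> (1/3) ^ n * norm (w n) \<le> cmod (cinner q (w n))"
      by blast
  qed
  then obtain x where x_in: "\<And>n. x n \<in> S"
    and x_step: "\<And>n. norm (x (Suc n) - x n) = (1/3) ^ n"
    and x_large: "\<And>n. (1/3) ^ n * norm (w n) \<le> cmod (cinner (x (Suc n)) (w n))"
    by blast
  obtain y where lim: "x \<longlonglongrightarrow> y" and tail: "\<And>n. norm (y - x n) \<le> (1/3) ^ n * (3/2)"
    by (rule geometric_increments_convergent[of x "1/3"]) (use x_step in \<open>auto simp: field_simps\<close>)
  have "y \<in> S" using closed_sequentially[OF S(2)] x_in lim by blast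
  moreover have "(1/3) ^ k * norm (w k) / 2 \<le> cmod (cinner y (w k))" for k
  proof -
    have "norm (y - x (Suc k)) \<le> (1/3) ^ k / 2"
      using tail[of "Suc k"] by simp
    then have "cmod (cinner (y - x (Suc k)) (w k)) \<le> (1/3) ^ k / 2 * norm (w k)"
      using complex_Cauchy_Schwarz[of "y - x (Suc k)" "w k"] mult_right_mono[OF _ norm_ge_zero]
      by (meson order_trans)
    moreover have "cmod (cinner (x (Suc k)) (w k)) \<le> cmod (cinner y (w k)) + cmod (cinner (y - x (Suc k)) (w k))"
      using norm_triangle_ineq4[of "cinner y (w k)" "cinner (y - x (Suc k)) (w k)"]
      by (simp add: cinner_diff_left)
    ultimately show ?thesis
      using x_large[of k] by linarith
  qed
  ultimately show ?thesis using that by blast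
qed

lemma uniform_boundedness:
  fixes v :: "nat \<Rightarrow> 'a::complex_hilbert"
  assumes S: "csubspace S" "closed S" and v: "\<And>n. v n \<in> S"
    and pointwise: "\<And>y. y \<in> S \<Longrightarrow> \<exists>B. \<forall>n. cmod (cinner y (v n)) \<le> B"
  shows "\<exists>M. \<forall>n. norm (v n) \<le> M"
proof (rule ccontr)
  assume "\<not> (\<exists>M. \<forall>n. norm (v n) \<le> M)"
  then obtain g where g: "\<And>k::nat. 4 ^ k < norm (v (g k))"
    by (meson not_le)
  have "v (g k) \<noteq> 0" for k
    using g[of k] by (auto simp: not_less)
  then obtain y where "y \<in> S" and y: "\<And>k. (1/3) ^ k * norm (v (g k)) / 2 \<le> cmod (cinner y (v (g k)))"
    using gliding_hump[OF S, of "\<lambda>k. v (g k)"] v by blast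
  obtain B where B: "\<And>n. cmod (cinner y (v n)) \<le> B"
    using pointwise[OF \<open>y \<in> S\<close>] by blast
  obtain k where "2 * B < (4/3) ^ k"
    using real_arch_pow[of "4/3" "2 * B"] by auto
  moreover have "(4/3) ^ k / 2 < (1/3) ^ k * norm (v (g k)) / 2"
    using g[of k] by (simp add: power_divide field_simps)
  ultimately show False
    using y[of k] B[of "g k"] by linarith
qed

section \<open>The Hardy-space model of a BCL triple\<close>

definition constant_coeffs :: "'e::complex_inner \<Rightarrow> nat \<Rightarrow> 'e" where
  "constant_coeffs e = (\<lambda>n. if n = 0 then e else 0)"

lemma constant_coeffs_sums: "(\<lambda>n. (norm (constant_coeffs e n))\<^sup>2) sums (norm e)\<^sup>2"
proof -
  have "(\<lambda>n. (norm (constant_coeffs e n))\<^sup>2) = (\<lambda>n. if n = 0 then (norm e)\<^sup>2 else 0)"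
    by (auto simp: constant_coeffs_def fun_eq_iff)
  then show ?thesis using sums_single[of 0 "\<lambda>_. (norm e)\<^sup>2"] by simp
qed

lemma constant_coeffs_l2: "constant_coeffs e \<in> l2_seqs"
  unfolding l2_seqs_def using sums_summable[OF constant_coeffs_sums] by blast

lemma hardy_fun_at_0: "hardy_fun a 0 = a 0"
proof -
  have "(\<lambda>n. ((0::complex) ^ n) *\<^sub>C a n) = (\<lambda>n. if n = 0 then a n else 0)"
    by (auto simp: fun_eq_iff scaleC_one power_0_left)
  then show ?thesis
    unfolding hardy_fun_def using sums_single[of 0 a] sums_unique by metis
qed

locale bcl_model =
  fixes V1 V2 :: "'h::complex_hilbert \<Rightarrow> 'h" and P U :: "'e::complex_hilbert \<Rightarrow> 'e"
    and Hp Hu :: "'h set" and W :: "'h \<Rightarrow> nat \<Rightarrow> 'e"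
  assumes isometry1: "isometry V1" and isometry2: "isometry V2"
    and projection: "projection P" and unitary: "unitary U"
    and Hp: "closed_csubspace Hp" and Hu: "closed_csubspace Hu"
    and orthogonal: "\<forall>x\<in>Hp. \<forall>y\<in>Hu. cinner x y = 0"
    and decompose: "\<forall>h. \<exists>x\<in>Hp. \<exists>y\<in>Hu. h = x + y"
    and reduces1p: "reduces Hp V1" and reduces2p: "reduces Hp V2"
    and reduces1u: "reduces Hu V1" and reduces2u: "reduces Hu V2"
    and W_bij: "bij_betw W Hp l2_seqs"
    and W_add: "\<forall>x\<in>Hp. \<forall>y\<in>Hp. W (x + y) = (\<lambda>n. W x n + W y n)"
    and W_scaleC: "\<forall>c. \<forall>x\<in>Hp. W (c *\<^sub>C x) = (\<lambda>n. c *\<^sub>C W x n)"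
    and W_norm: "\<forall>x\<in>Hp. (\<Sum>n. (norm (W x n))\<^sup>2) = (norm x)\<^sup>2"
    and W_intertwines: "\<forall>x\<in>Hp. \<forall>z. norm z < 1 \<longrightarrow>
            hardy_fun (W (V1 x)) z = bcl_phi1 P U z (hardy_fun (W x) z)
          \<and> hardy_fun (W (V2 x)) z = bcl_phi2 P U z (hardy_fun (W x) z)"

lemma bcl_triple_model:
  assumes "isometry V1" "isometry V2" "bcl_triple V1 V2 P U"
  shows "\<exists>Hp Hu W. bcl_model V1 V2 P U Hp Hu W"
  using assms unfolding bcl_triple_def bcl_model_def
  by (elim conjE exE) (intro exI conjI; assumption)

context bcl_model
begin

lemma Hp_csubspace: "csubspace Hp"
  using Hp by (simp add: closed_csubspace_def)

lemma W_zero: "W 0 = (\<lambda>n. 0)"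
  using W_scaleC csubspace_0[OF Hp_csubspace] by (metis (no_types) scaleC_zero_left)

lemma W_summable: "x \<in> Hp \<Longrightarrow> summable (\<lambda>n. (norm (W x n))\<^sup>2)"
  using W_bij by (auto simp: bij_betw_def l2_seqs_def)

lemma exists_constant: "\<exists>x\<in>Hp. W x = constant_coeffs e"
  using W_bij constant_coeffs_l2 by (metis bij_betw_def imageE)

lemma norm_constant:
  assumes "x \<in> Hp" "W x = constant_coeffs e"
  shows "norm x = norm e"
proof -
  have "(norm x)\<^sup>2 = (norm e)\<^sup>2"
    using W_norm[rule_format, OF assms(1)] assms(2) sums_unique[OF constant_coeffs_sums[of e]] by simp
  then show ?thesis by (simp add: power2_eq_iff_nonneg)
qed

lemma coeff0_V1: "x \<in> Hp \<Longrightarrow> W (V1 x) 0 = cadjoint U (W x 0 - P (W x 0))"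
  using W_intertwines[rule_format, of x 0] by (simp add: hardy_fun_at_0 bcl_phi1_def)

lemma coeff0_V2: "x \<in> Hp \<Longrightarrow> W (V2 x) 0 = P (U (W x 0))"
  using W_intertwines[rule_format, of x 0] by (simp add: hardy_fun_at_0 bcl_phi2_def)

lemma cinner_constant:
  assumes y: "y \<in> Hp" and x: "x \<in> Hp" and Wx: "W x = constant_coeffs c"
  shows "cinner y x = cinner (W y 0) c"
proof -
  have re: "Re (cinner y x) = Re (cinner (W y 0) c)" if x: "x \<in> Hp" and Wx: "W x = constant_coeffs c" for x c
  proof -
    have "y + x \<in> Hp" using csubspace_add[OF Hp_csubspace y x] .
    have tail: "(norm v)\<^sup>2 = (norm (W v 0))\<^sup>2 + (\<Sum>n. (norm (W v (Suc n)))\<^sup>2)" if "v \<in> Hp" for v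
      using W_norm suminf_split_head[OF W_summable[OF that]] that by simp
    have "W (y + x) = (\<lambda>n. W y n + constant_coeffs c n)"
      using W_add y x Wx by simp
    then have "(norm (y + x))\<^sup>2 = (norm (W y 0 + c))\<^sup>2 + (\<Sum>n. (norm (W y (Suc n)))\<^sup>2)"
      using tail[OF \<open>y + x \<in> Hp\<close>] by (simp add: constant_coeffs_def)
    then show ?thesis
      using tail[OF y] norm_constant[OF x Wx] power2_norm_add[of y x] power2_norm_add[of "W y 0" c]
      by simp
  qed
  have "\<i> *\<^sub>C x \<in> Hp" using csubspace_scaleC[OF Hp_csubspace x] .
  moreover have "W (\<i> *\<^sub>C x) = constant_coeffs (\<i> *\<^sub>C c)"
    using W_scaleC x Wx by (auto simp: constant_coeffs_def fun_eq_iff)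
  ultimately have "Re (cinner y (\<i> *\<^sub>C x)) = Re (cinner (W y 0) (\<i> *\<^sub>C c))"
    by (rule re)
  then have "Im (cinner y x) = Im (cinner (W y 0) c)"
    by (simp add: cinner_scaleC_right)
  with re[OF x Wx] show ?thesis by (simp add: complex_eqI)
qed

text \<open>On constants, \<open>V\<^sup>*\<close> acts through the adjoint \<open>G\<close> of the zeroth Taylor coefficient \<open>F\<close> of \<open>V\<close>;
  the part of \<open>H\<close> outside the model does not contribute since \<open>V\<close> maps \<open>Hu\<close> into \<open>Hu \<bottom> Hp\<close>.\<close>

lemma cadjoint_on_constant:
  assumes V: "isometry V" "reduces Hp V" "reduces Hu V"
    and F: "\<And>y. y \<in> Hp \<Longrightarrow> W (V y) 0 = F (W y 0)"
    and FG: "\<And>b. cinner (F b) e = cinner b (G e)"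
    and x: "x \<in> Hp" "W x = constant_coeffs e" and x': "x' \<in> Hp" "W x' = constant_coeffs (G e)"
  shows "cadjoint V x = x'"
proof (rule cinner_right_ext)
  fix y
  have bc: "bounded_clinear V" using V(1) by (rule isometry_bounded_clinear)
  obtain yp yu where yp: "yp \<in> Hp" and yu: "yu \<in> Hu" and y: "y = yp + yu"
    using decompose by blast
  have "V yp \<in> Hp" "V yu \<in> Hu" using V yp yu by (auto simp: reduces_def)
  have orth: "cinner u v = 0" if "v \<in> Hp" "u \<in> Hu" for u v
    using orthogonal that by (metis cinner_cnj_commute complex_cnj_zero)
  have "cinner y (cadjoint V x) = cinner (V yp) x + cinner (V yu) x"
    by (simp add: cinner_cadjoint_right[OF bc, symmetric] y bounded_clinear_add[OF bc] cinner_add_left)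
  also have "\<dots> = cinner (W yp 0) (G e)"
    using cinner_constant[OF \<open>V yp \<in> Hp\<close> x] orth[OF x(1) \<open>V yu \<in> Hu\<close>] by (simp add: F[OF yp] FG)
  also have "\<dots> = cinner y x'"
    using cinner_constant[OF yp x'] orth[OF x'(1) yu] by (simp add: y cinner_add_left)
  finally show "cinner y (cadjoint V x) = cinner y x'" .
qed

lemma cadjoint_V1_constant:
  assumes "x \<in> Hp" "W x = constant_coeffs e" "x' \<in> Hp" "W x' = constant_coeffs (U e - P (U e))"
  shows "cadjoint V1 x = x'"
proof (rule cadjoint_on_constant[where F = "\<lambda>b. cadjoint U (b - P b)" and G = "\<lambda>e. U e - P (U e)",
      OF isometry1 reduces1p reduces1u coeff0_V1 _ assms])
  show "cinner (cadjoint U (b - P b)) e = cinner b (U e - P (U e))" for b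
    by (simp add: cinner_cadjoint_left[OF unitary_bounded_clinear[OF unitary]] cinner_diff_left
        cinner_diff_right projection_selfadjoint[OF projection])
qed

lemma cadjoint_V2_constant:
  assumes "x \<in> Hp" "W x = constant_coeffs e" "x' \<in> Hp" "W x' = constant_coeffs (cadjoint U (P e))"
  shows "cadjoint V2 x = x'"
proof (rule cadjoint_on_constant[where F = "\<lambda>b. P (U b)" and G = "\<lambda>e. cadjoint U (P e)",
      OF isometry2 reduces2p reduces2u coeff0_V2 _ assms])
  show "cinner (P (U b)) e = cinner b (cadjoint U (P e))" for b
    by (simp add: cinner_cadjoint_right[OF unitary_bounded_clinear[OF unitary]]
        projection_selfadjoint[OF projection])
qed

text \<open>Evaluating \<open>C(V\<^sub>1,V\<^sub>2) = 0\<close> at the constant \<open>e\<close> gives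
  \<open>\<parallel>e\<parallel>\<^sup>2 = \<parallel>P\<^sup>\<bottom>U e\<parallel>\<^sup>2 + \<parallel>U\<^sup>*P e\<parallel>\<^sup>2\<close>.\<close>

lemma norm_P_U:
  assumes defect: "\<forall>x. defect V1 V2 x = 0"
  shows "norm (P (U e)) = norm (P e)"
proof -
  define a1 where "a1 = U e - P (U e)"
  define a2 where "a2 = cadjoint U (P e)"
  obtain x where x: "x \<in> Hp" "W x = constant_coeffs e" using exists_constant by blast
  obtain x1 where x1: "x1 \<in> Hp" "W x1 = constant_coeffs a1" using exists_constant by blast
  obtain x2 where x2: "x2 \<in> Hp" "W x2 = constant_coeffs a2" using exists_constant by blast
  have adj1: "cadjoint V1 x = x1" using cadjoint_V1_constant[OF x x1[unfolded a1_def]] .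
  have adj2: "cadjoint V2 x = x2" using cadjoint_V2_constant[OF x x2[unfolded a2_def]] .
  have "cadjoint V2 x1 = 0"
    by (rule cadjoint_V2_constant[OF x1 csubspace_0[OF Hp_csubspace]])
      (simp add: W_zero a1_def projection_complement[OF projection] constant_coeffs_def fun_eq_iff
        bounded_clinear_zero[OF cadjoint_unitary_bounded_clinear[OF unitary]])
  then have "x = V1 x1 + V2 x2"
    using defect[rule_format, of x]
    by (simp add: defect_def adj1 adj2 bounded_clinear_zero[OF isometry_bounded_clinear[OF isometry1]]
        bounded_clinear_zero[OF isometry_bounded_clinear[OF isometry2]] algebra_simps)
  then have "cinner x x = cinner (V1 x1) x + cinner (V2 x2) x"
    by (metis cinner_add_left)
  also have "\<dots> = cinner x1 x1 + cinner x2 x2"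
    by (simp add: cinner_cadjoint_right[OF isometry_bounded_clinear[OF isometry1]]
        cinner_cadjoint_right[OF isometry_bounded_clinear[OF isometry2]] adj1 adj2)
  finally have "cinner x x = cinner x1 x1 + cinner x2 x2" .
  then have "(norm e)\<^sup>2 = (norm a1)\<^sup>2 + (norm a2)\<^sup>2"
    using norm_constant[OF x] norm_constant[OF x1] norm_constant[OF x2]
    by (simp only: cinner_norm of_real_add[symmetric] of_real_eq_iff)
  moreover have "(norm e)\<^sup>2 = (norm (P (U e)))\<^sup>2 + (norm a1)\<^sup>2"
    unfolding a1_def using power2_norm_projection[OF projection, of "U e"] norm_unitary[OF unitary] by simp
  moreover have "norm a2 = norm (P e)"
    by (simp add: a2_def norm_cadjoint_unitary[OF unitary])
  ultimately show ?thesis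
    by (simp add: power2_eq_iff_nonneg)
qed

lemma P_U_commute:
  assumes "\<forall>x. defect V1 V2 x = 0"
  shows "P (U e) = U (P e)"
proof (rule projection_commutes_with_unitary[OF projection unitary])
  show "P (U f) = 0" if "P f = 0" for f
    using norm_P_U[OF assms, of f] that by simp
  show "P (cadjoint U f) = 0" if "P f = 0" for f
    using norm_P_U[OF assms, of "cadjoint U f"] that unitary by simp
qed

lemma unitary_maps_onto_Hp:
  assumes "unitary V" "reduces Hp V" "reduces Hu V" "t \<in> Hp"
  obtains k where "k \<in> Hp" "t = V k"
proof -
  have bc: "bounded_clinear V" using assms(1) by (simp add: unitary_def isometry_def)
  obtain k where "t = V k" using assms(1) by (auto simp: unitary_def)
  obtain kp ku where kp: "kp \<in> Hp" and ku: "ku \<in> Hu" and k: "k = kp + ku"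
    using decompose by blast
  have "V kp \<in> Hp" "V ku \<in> Hu" using assms kp ku by (auto simp: reduces_def)
  have "V ku = t - V kp"
    using \<open>t = V k\<close> k bounded_clinear_add[OF bc] by simp
  moreover have "t - V kp \<in> Hp"
    using csubspace_diff[OF Hp_csubspace \<open>t \<in> Hp\<close> \<open>V kp \<in> Hp\<close>] .
  ultimately have "cinner (V ku) (V ku) = 0"
    using orthogonal \<open>V ku \<in> Hu\<close> by simp
  then have "V ku = 0" by simp
  then show ?thesis
    using that[OF kp] \<open>V ku = t - V kp\<close> by simp
qed

lemma unitary_V2_imp_P_id:
  assumes "unitary V2"
  shows "P e = e"
proof -
  obtain t where t: "t \<in> Hp" "W t = constant_coeffs (e - P e)" using exists_constant by blast
  obtain k where "k \<in> Hp" "t = V2 k" using unitary_maps_onto_Hp[OF assms reduces2p reduces2u t(1)] .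
  then have "W (V2 k) 0 = e - P e"
    using t(2) by (simp add: constant_coeffs_def)
  then have "e - P e = P (U (W k 0))"
    using coeff0_V2[OF \<open>k \<in> Hp\<close>] by simp
  then have "e - P e = P (e - P e)"
    by (simp add: projection_idem[OF projection])
  then show ?thesis
    using projection_complement[OF projection] by simp
qed

lemma unitary_V1_imp_P_zero:
  assumes "unitary V1" and "\<forall>x. defect V1 V2 x = 0"
  shows "P e = 0"
proof -
  obtain t where t: "t \<in> Hp" "W t = constant_coeffs (P e)" using exists_constant by blast
  obtain k where "k \<in> Hp" "t = V1 k" using unitary_maps_onto_Hp[OF assms(1) reduces1p reduces1u t(1)] .
  then have "W (V1 k) 0 = P e"
    using t(2) by (simp add: constant_coeffs_def)
  then have "P e = cadjoint U (W k 0 - P (W k 0))"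
    using coeff0_V1[OF \<open>k \<in> Hp\<close>] by simp
  then have "P (U (P e)) = 0"
    using unitary projection_complement[OF projection] by simp
  moreover have "P (U (P e)) = U (P e)"
    using P_U_commute[OF assms(2), of "P e"] by (simp add: projection_idem[OF projection])
  ultimately have "cadjoint U (U (P e)) = cadjoint U 0"
    by simp
  then show ?thesis
    using unitary bounded_clinear_zero[OF cadjoint_unitary_bounded_clinear[OF unitary]] by simp
qed

end

section \<open>Spectrum of a unitary on a reducing subspace\<close>

lemma cinner_unitary_shift_le:
  fixes U :: "'e::complex_hilbert \<Rightarrow> 'e"
  assumes U: "unitary U" and "cmod l = 1"
  shows "cmod (cinner (U w - l *\<^sub>C w) x) \<le> norm w * norm (U x - l *\<^sub>C x)"
proof -
  note U_lin = bounded_clinear_diff[OF unitary_bounded_clinear[OF U]]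
    bounded_clinear_scaleC[OF unitary_bounded_clinear[OF U]]
  have "cnj l * l = 1"
    using \<open>cmod l = 1\<close> complex_norm_square[of l] by (simp add: mult.commute)
  have "cinner (U w - l *\<^sub>C w) x = cinner w (cadjoint U x - cnj l *\<^sub>C x)"
    by (simp add: cinner_diff_left cinner_diff_right cinner_scaleC_left cinner_scaleC_right
        cinner_cadjoint_right[OF unitary_bounded_clinear[OF U]])
  moreover have "norm (cadjoint U x - cnj l *\<^sub>C x) = norm (U x - l *\<^sub>C x)"
  proof -
    have "norm (cadjoint U x - cnj l *\<^sub>C x) = norm (U (cadjoint U x - cnj l *\<^sub>C x))"
      by (simp add: norm_unitary[OF U])
    also have "U (cadjoint U x - cnj l *\<^sub>C x) = cnj l *\<^sub>C (l *\<^sub>C x - U x)"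
      using \<open>cnj l * l = 1\<close> U by (simp add: U_lin scaleC_diff_right scaleC_scaleC scaleC_one)
    finally show ?thesis
      using \<open>cmod l = 1\<close> by (simp add: norm_scaleC norm_minus_commute)
  qed
  ultimately show ?thesis
    using complex_Cauchy_Schwarz[of w "cadjoint U x - cnj l *\<^sub>C x"] by simp
qed

locale unitary_reducing =
  fixes U Q :: "'e::complex_hilbert \<Rightarrow> 'e"
  assumes unitary: "unitary U" and bounded_Q: "bounded_clinear Q"
    and idem: "\<And>x. Q (Q x) = Q x" and commute: "\<And>x. Q (U x) = U (Q x)"
begin

lemmas U_add = bounded_clinear_add[OF unitary_bounded_clinear[OF unitary]]
  and U_scaleC = bounded_clinear_scaleC[OF unitary_bounded_clinear[OF unitary]]
  and U_diff = bounded_clinear_diff[OF unitary_bounded_clinear[OF unitary]]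
  and U_cancel = cadjoint_unitary_cancel[OF unitary] unitary_cadjoint_cancel[OF unitary]
  and cadjoint_add = bounded_clinear_add[OF cadjoint_unitary_bounded_clinear[OF unitary]]
  and cadjoint_scaleC = bounded_clinear_scaleC[OF cadjoint_unitary_bounded_clinear[OF unitary]]
  and cadjoint_diff = bounded_clinear_diff[OF cadjoint_unitary_bounded_clinear[OF unitary]]

lemma commute_cadjoint: "Q (cadjoint U x) = cadjoint U (Q x)"
proof -
  have "cadjoint U (Q x) = cadjoint U (Q (U (cadjoint U x)))"
    by (simp add: U_cancel)
  also have "\<dots> = Q (cadjoint U x)"
    by (simp only: commute U_cancel(1))
  finally show ?thesis by (rule sym)
qed

lemma range_iff: "x \<in> range Q \<longleftrightarrow> Q x = x"
  using idem by (metis rangeE rangeI)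

lemma csubspace_range: "csubspace (range Q)"
  unfolding csubspace_def
proof (intro conjI ballI allI)
  show "0 \<in> range Q"
    by (simp add: range_iff bounded_clinear_zero[OF bounded_Q])
  show "x + y \<in> range Q" if "x \<in> range Q" "y \<in> range Q" for x y
    using that by (simp add: range_iff bounded_clinear_add[OF bounded_Q])
  show "c *\<^sub>C x \<in> range Q" if "x \<in> range Q" for c x
    using that by (simp add: range_iff bounded_clinear_scaleC[OF bounded_Q])
qed

lemma closed_range: "closed (range Q)"
proof -
  have "closed {x. Q x = id x}"
    by (rule closed_Collect_eq)
      (auto intro: linear_continuous_on bounded_clinear_bounded_linear[OF bounded_Q] continuous_on_id)
  moreover have "range Q = {x. Q x = id x}"
    using range_iff by auto
  ultimately show ?thesis by simp
qed

lemma U_range: "x \<in> range Q \<Longrightarrow> U x \<in> range Q"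
  and cadjoint_range: "x \<in> range Q \<Longrightarrow> cadjoint U x \<in> range Q"
  by (simp_all add: range_iff commute commute_cadjoint)

lemma shift_range: "x \<in> range Q \<Longrightarrow> a *\<^sub>C U x - b *\<^sub>C x \<in> range Q"
  using csubspace_range by (simp add: csubspace_diff csubspace_scaleC U_range)

lemma reduces_range: "reduces (range Q) U"
  by (auto simp: reduces_def U_range cadjoint_range)

lemma not_in_spectrum_if_bounded_below:
  assumes surj: "\<forall>y\<in>range Q. \<exists>x\<in>range Q. U x - l *\<^sub>C x = y"
    and "0 < c" and below: "\<And>x. x \<in> range Q \<Longrightarrow> c * norm x \<le> norm (U x - l *\<^sub>C x)"
  shows "l \<notin> spectrum_on (range Q) U"
proof -
  define R where "R y = (SOME x. x \<in> range Q \<and> U x - l *\<^sub>C x = y)" for y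
  have R: "R y \<in> range Q" "U (R y) - l *\<^sub>C R y = y" if "y \<in> range Q" for y
    using someI_ex[of "\<lambda>x. x \<in> range Q \<and> U x - l *\<^sub>C x = y"] surj that by (auto simp: R_def)
  have inj: "x = x'" if "x \<in> range Q" "x' \<in> range Q" "U x - l *\<^sub>C x = U x' - l *\<^sub>C x'" for x x'
  proof -
    have "c * norm (x - x') \<le> norm (U (x - x') - l *\<^sub>C (x - x'))"
      using below csubspace_diff[OF csubspace_range that(1,2)] by blast
    also have "U (x - x') - l *\<^sub>C (x - x') = (U x - l *\<^sub>C x) - (U x' - l *\<^sub>C x')"
      by (simp add: U_diff scaleC_diff_right)
    also have "\<dots> = 0"
      using that(3) by simp
    finally show ?thesis
      using \<open>0 < c\<close> by (simp add: mult_le_0_iff)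
  qed
  have "norm (R x) \<le> 1 / c * norm x" if "x \<in> range Q" for x
    using below[OF R(1)[OF that]] R(2)[OF that] \<open>0 < c\<close> by (simp add: field_simps)
  moreover have "R (U x - l *\<^sub>C x) = x" if "x \<in> range Q" for x
    using R[OF shift_range[OF that, of 1 l]] inj that by (simp add: scaleC_one)
  ultimately show ?thesis
    unfolding spectrum_on_def using R by blast
qed

lemma range_contraction_fixpoint:
  assumes "\<And>x. x \<in> range Q \<Longrightarrow> f x \<in> range Q"
    and "\<And>x x'. dist (f x) (f x') \<le> k * dist x x'" and "0 \<le> k" "k < 1"
  obtains x where "x \<in> range Q" "f x = x"
proof -
  have "complete (range Q)"
    using closed_range complete_eq_closed by blast
  with assms have "\<exists>!x\<in>range Q. f x = x"
    by (intro Banach_fix) blast+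
  then show ?thesis using that by blast
qed

lemma surj_off_circle:
  assumes "cmod l \<noteq> 1" and y: "y \<in> range Q"
  shows "\<exists>x\<in>range Q. U x - l *\<^sub>C x = y"
proof (cases "cmod l < 1")
  case True
  obtain x where "x \<in> range Q" "cadjoint U (y + l *\<^sub>C x) = x"
  proof (rule range_contraction_fixpoint)
    show "cadjoint U (y + l *\<^sub>C x) \<in> range Q" if "x \<in> range Q" for x
      using cadjoint_range csubspace_add[OF csubspace_range y csubspace_scaleC[OF csubspace_range that]]
      by blast
    show "dist (cadjoint U (y + l *\<^sub>C x)) (cadjoint U (y + l *\<^sub>C x')) \<le> cmod l * dist x x'" for x x'
      by (simp add: dist_norm cadjoint_diff[symmetric] scaleC_diff_right[symmetric]
          norm_cadjoint_unitary[OF unitary] norm_scaleC)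
  qed (use True in simp_all)
  then have "U x = y + l *\<^sub>C x"
    using U_cancel(2)[of "y + l *\<^sub>C x"] by simp
  then show ?thesis
    using \<open>x \<in> range Q\<close> by (intro bexI[of _ x]) simp_all
next
  case False
  with assms have "1 < cmod l" by simp
  then have "l \<noteq> 0" "0 \<le> 1 / cmod l" "1 / cmod l < 1"
    by (auto simp: divide_less_eq)
  obtain x where "x \<in> range Q" "(1 / l) *\<^sub>C (U x - y) = x"
  proof (rule range_contraction_fixpoint)
    show "(1 / l) *\<^sub>C (U x - y) \<in> range Q" if "x \<in> range Q" for x
      using csubspace_scaleC[OF csubspace_range csubspace_diff[OF csubspace_range U_range[OF that] y]] .
    show "dist ((1 / l) *\<^sub>C (U x - y)) ((1 / l) *\<^sub>C (U x' - y)) \<le> 1 / cmod l * dist x x'" for x x'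
      by (simp add: dist_norm scaleC_diff_right[symmetric] U_diff[symmetric] norm_scaleC
          norm_unitary[OF unitary] norm_divide)
  qed (use \<open>0 \<le> 1 / cmod l\<close> \<open>1 / cmod l < 1\<close> in auto)
  moreover have "l *\<^sub>C ((1 / l) *\<^sub>C (U x - y)) = U x - y"
    using \<open>l \<noteq> 0\<close> by (simp add: scaleC_scaleC scaleC_one)
  ultimately have "U x - y = l *\<^sub>C x"
    by simp
  then show ?thesis
    using \<open>x \<in> range Q\<close> by (intro bexI[of _ x]) (simp_all flip: \<open>U x - y = l *\<^sub>C x\<close>)
qed

lemma spectrum_on_circle:
  assumes "l \<in> spectrum_on (range Q) U"
  shows "cmod l = 1"
proof (rule ccontr)
  assume "cmod l \<noteq> 1"
  have "\<bar>1 - cmod l\<bar> * norm x \<le> norm (U x - l *\<^sub>C x)" for x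
  proof -
    have "(1 - cmod l) * norm x = norm (U x) - norm (l *\<^sub>C x)"
      by (simp add: norm_unitary[OF unitary] norm_scaleC algebra_simps)
    then show ?thesis
      using norm_triangle_ineq3[of "U x" "l *\<^sub>C x"] by (metis abs_mult abs_norm_cancel)
  qed
  moreover have "0 < \<bar>1 - cmod l\<bar>"
    using \<open>cmod l \<noteq> 1\<close> by simp
  moreover have "\<forall>y\<in>range Q. \<exists>x\<in>range Q. U x - l *\<^sub>C x = y"
    using surj_off_circle[OF \<open>cmod l \<noteq> 1\<close>] by blast
  ultimately have "l \<notin> spectrum_on (range Q) U"
    using not_in_spectrum_if_bounded_below by blast
  then show False
    using assms by simp
qed

lemma eigenvector_zero:
  assumes "cmod l = 1" and surj: "\<forall>y\<in>range Q. \<exists>x\<in>range Q. U x - l *\<^sub>C x = y"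
    and x: "x \<in> range Q" and "U x = l *\<^sub>C x"
  shows "x = 0"
proof -
  obtain w where "w \<in> range Q" "U w - l *\<^sub>C w = x" using surj x by blast
  then have "cmod (cinner x x) \<le> norm w * norm (U x - l *\<^sub>C x)"
    using cinner_unitary_shift_le[OF unitary \<open>cmod l = 1\<close>, of w x] by simp
  then show ?thesis
    using \<open>U x = l *\<^sub>C x\<close> by simp
qed

lemma unbounded_approximate_eigenvectors:
  assumes l: "l \<in> spectrum_on (range Q) U" and "cmod l = 1"
    and surj: "\<forall>y\<in>range Q. \<exists>x\<in>range Q. U x - l *\<^sub>C x = y"
  obtains v where "\<And>n. v n \<in> range Q" "\<And>n. real n + 1 < norm (v n)"
    "\<And>n. norm (U (v n) - l *\<^sub>C v n) = 1"
proof -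
  have "\<forall>n. \<exists>x. x \<in> range Q \<and> norm (U x - l *\<^sub>C x) < 1 / (real n + 1) * norm x"
  proof (rule allI, rule ccontr)
    fix n
    assume "\<nexists>x. x \<in> range Q \<and> norm (U x - l *\<^sub>C x) < 1 / (real n + 1) * norm x"
    then have "l \<notin> spectrum_on (range Q) U"
      by (intro not_in_spectrum_if_bounded_below[OF surj, of "1 / (real n + 1)"]) (auto simp: not_less)
    with l show False by simp
  qed
  then have "\<exists>x. \<forall>n. x n \<in> range Q \<and> norm (U (x n) - l *\<^sub>C x n) < 1 / (real n + 1) * norm (x n)"
    by (rule choice)
  then obtain x where x: "\<forall>n. x n \<in> range Q \<and> norm (U (x n) - l *\<^sub>C x n) < 1 / (real n + 1) * norm (x n)"
    ..
  then have x_in: "\<And>n. x n \<in> range Q"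
    and x_small: "\<And>n. norm (U (x n) - l *\<^sub>C x n) < 1 / (real n + 1) * norm (x n)"
    by blast+
  define d where "d n = norm (U (x n) - l *\<^sub>C x n)" for n
  have "0 < d n" for n
  proof -
    have "x n \<noteq> 0"
      using x_small[of n] by auto
    then have "U (x n) - l *\<^sub>C x n \<noteq> 0"
      using eigenvector_zero[OF \<open>cmod l = 1\<close> surj x_in[of n]] by auto
    then show ?thesis by (simp add: d_def)
  qed
  show ?thesis
  proof (rule that[of "\<lambda>n. complex_of_real (1 / d n) *\<^sub>C x n"])
    show "complex_of_real (1 / d n) *\<^sub>C x n \<in> range Q" for n
      using csubspace_scaleC[OF csubspace_range x_in] .
    show "real n + 1 < norm (complex_of_real (1 / d n) *\<^sub>C x n)" for n
      using x_small[of n] \<open>0 < d n\<close> by (simp add: d_def norm_scaleC norm_divide field_simps)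
    have "U (complex_of_real (1 / d n) *\<^sub>C x n) - l *\<^sub>C complex_of_real (1 / d n) *\<^sub>C x n
        = complex_of_real (1 / d n) *\<^sub>C (U (x n) - l *\<^sub>C x n)" for n
      by (simp add: U_scaleC scaleC_diff_right scaleC_scaleC mult.commute)
    then show "norm (U (complex_of_real (1 / d n) *\<^sub>C x n) - l *\<^sub>C complex_of_real (1 / d n) *\<^sub>C x n) = 1" for n
      using \<open>0 < d n\<close> by (simp add: norm_scaleC norm_divide d_def[symmetric])
  qed
qed

text \<open>Without Baire category, surjectivity of \<open>U - l\<close> does not directly give a bounded
  inverse. Instead, normality of \<open>U - l\<close> makes normalised approximate eigenvectors weakly
  bounded on \<open>ran (U - l)\<close>, contradicting the uniform boundedness principle.\<close>

lemma spectrum_on_not_surj: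
  assumes l: "l \<in> spectrum_on (range Q) U"
  obtains k where "k \<in> range Q" and "\<And>w. w \<in> range Q \<Longrightarrow> U w - l *\<^sub>C w \<noteq> k"
proof (rule ccontr)
  assume "\<not> thesis"
  with that have surj: "\<forall>y\<in>range Q. \<exists>x\<in>range Q. U x - l *\<^sub>C x = y" by blast
  have "cmod l = 1" using spectrum_on_circle[OF l] .
  obtain v where v_in: "\<And>n. v n \<in> range Q" and v_large: "\<And>n. real n + 1 < norm (v n)"
    and v_shift: "\<And>n. norm (U (v n) - l *\<^sub>C v n) = 1"
    using unbounded_approximate_eigenvectors[OF l \<open>cmod l = 1\<close> surj] by blast
  have pointwise: "\<exists>B. \<forall>n. cmod (cinner y (v n)) \<le> B" if "y \<in> range Q" for y
  proof -
    obtain w where w: "U w - l *\<^sub>C w = y" using surj \<open>y \<in> range Q\<close> by blast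
    have "cmod (cinner y (v n)) \<le> norm w" for n
      using cinner_unitary_shift_le[OF unitary \<open>cmod l = 1\<close>, of w "v n"] v_shift[of n]
      unfolding w by simp
    then show ?thesis by blast
  qed
  obtain M where M: "\<And>n. norm (v n) \<le> M"
    using uniform_boundedness[OF csubspace_range closed_range v_in pointwise] by blast
  obtain n :: nat where "M < real n"
    using reals_Archimedean2 by blast
  then show False
    using v_large[of n] M[of n] by linarith
qed

definition in_commutant :: "('e \<Rightarrow> 'e) \<Rightarrow> bool" where
  "in_commutant X \<longleftrightarrow> (\<forall>s\<in>range Q. X s \<in> range Q)
     \<and> (\<forall>s\<in>range Q. \<forall>t\<in>range Q. X (s + t) = X s + X t)
     \<and> (\<forall>c. \<forall>s\<in>range Q. X (c *\<^sub>C s) = c *\<^sub>C X s)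
     \<and> (\<forall>s\<in>range Q. X (U s) = U (X s))
     \<and> (\<forall>s\<in>range Q. X (cadjoint U s) = cadjoint U (X s))"

lemma in_commutantD:
  assumes "in_commutant X" "s \<in> range Q"
  shows "X s \<in> range Q" "t \<in> range Q \<Longrightarrow> X (s + t) = X s + X t" "X (c *\<^sub>C s) = c *\<^sub>C X s"
    "X (U s) = U (X s)" "X (cadjoint U s) = cadjoint U (X s)"
  using assms unfolding in_commutant_def by blast+

lemma in_commutant_diff:
  assumes "in_commutant X" "s \<in> range Q" "t \<in> range Q"
  shows "X (s - t) = X s - X t"
  using in_commutantD(2)[OF assms(1,2), of "(-1) *\<^sub>C t"] in_commutantD(3)[OF assms(1,3), of "-1"]
    csubspace_scaleC[OF csubspace_range assms(3), of "-1"]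
  by simp

lemma in_commutant_shift:
  assumes "in_commutant X" "s \<in> range Q"
  shows "X (a *\<^sub>C U s - b *\<^sub>C s) = a *\<^sub>C U (X s) - b *\<^sub>C X s"
    and "X (a *\<^sub>C cadjoint U s - b *\<^sub>C s) = a *\<^sub>C cadjoint U (X s) - b *\<^sub>C X s"
  using assms csubspace_range
  by (simp_all add: in_commutant_diff csubspace_scaleC U_range cadjoint_range in_commutantD)

lemma in_commutant_scaleC: "in_commutant (\<lambda>x. c *\<^sub>C x)"
  unfolding in_commutant_def
  by (simp add: csubspace_scaleC[OF csubspace_range] scaleC_add_right scaleC_scaleC mult.commute
      U_scaleC cadjoint_scaleC)

lemma in_commutant_zero: "in_commutant (\<lambda>x. 0)"
  using in_commutant_scaleC[of 0] by simp

lemma in_commutant_U: "in_commutant (\<lambda>x. c *\<^sub>C U x)"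
  unfolding in_commutant_def
  by (simp add: csubspace_scaleC[OF csubspace_range] U_range scaleC_add_right scaleC_scaleC
      mult.commute U_add U_scaleC cadjoint_scaleC U_cancel)

lemma in_commutant_cadjoint: "in_commutant (\<lambda>x. c *\<^sub>C cadjoint U x)"
  unfolding in_commutant_def
  by (simp add: csubspace_scaleC[OF csubspace_range] cadjoint_range scaleC_add_right scaleC_scaleC
      mult.commute cadjoint_add cadjoint_scaleC U_scaleC U_cancel)

lemma in_commutant_comp:
  assumes "in_commutant X" "in_commutant Y"
  shows "in_commutant (\<lambda>x. X (Y x))"
  unfolding in_commutant_def
proof (intro conjI ballI allI)
  fix s assume s: "s \<in> range Q"
  note Y = in_commutantD[OF assms(2) s]
  note X = in_commutantD[OF assms(1) Y(1)]
  show "X (Y s) \<in> range Q" by (rule X(1))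
  show "X (Y (s + t)) = X (Y s) + X (Y t)" if "t \<in> range Q" for t
    using Y(2)[OF that] X(2)[OF in_commutantD(1)[OF assms(2) that]] by simp
  show "X (Y (c *\<^sub>C s)) = c *\<^sub>C X (Y s)" for c using Y(3) X(3) by simp
  show "X (Y (U s)) = U (X (Y s))" using Y(4) X(4) by simp
  show "X (Y (cadjoint U s)) = cadjoint U (X (Y s))" using Y(5) X(5) by simp
qed

lemma in_commutant_resolvent:
  assumes "l \<notin> spectrum_on (range Q) U"
  obtains R where "in_commutant R" and "\<And>s. s \<in> range Q \<Longrightarrow> R (U s - l *\<^sub>C s) = s"
proof -
  define N where "N x = U x - l *\<^sub>C x" for x
  obtain R where R_range: "\<And>x. x \<in> range Q \<Longrightarrow> R x \<in> range Q"
    and RN: "\<And>x. x \<in> range Q \<Longrightarrow> R (N x) = x"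
    and NR: "\<And>x. x \<in> range Q \<Longrightarrow> N (R x) = x"
    using assms unfolding spectrum_on_def N_def by blast
  have "in_commutant N"
    unfolding in_commutant_def N_def
    using shift_range[of _ 1 l] by (simp add: scaleC_one U_add U_scaleC U_diff cadjoint_diff scaleC_diff_right
        cadjoint_scaleC scaleC_add_right scaleC_scaleC mult.commute U_cancel)
  note N = in_commutantD[OF this]
  have "in_commutant R"
    unfolding in_commutant_def
  proof (intro conjI ballI allI)
    fix s assume s: "s \<in> range Q"
    show "R s \<in> range Q" by (rule R_range[OF s])
    have R_eqI: "R s' = x" if "x \<in> range Q" "s' = N x" for s' x
      using RN that by blast
    show "R (s + t) = R s + R t" if "t \<in> range Q" for t
      by (rule R_eqI) (use s that R_range NR N(2)[OF R_range[OF s]] csubspace_range in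
          \<open>simp_all add: csubspace_add\<close>)
    show "R (c *\<^sub>C s) = c *\<^sub>C R s" for c
      by (rule R_eqI) (use s R_range NR N(3)[OF R_range[OF s]] csubspace_range in
          \<open>simp_all add: csubspace_scaleC\<close>)
    show "R (U s) = U (R s)"
      by (rule R_eqI) (use s R_range NR N(4)[OF R_range[OF s]] in \<open>simp_all add: U_range\<close>)
    show "R (cadjoint U s) = cadjoint U (R s)"
      by (rule R_eqI) (use s R_range NR N(5)[OF R_range[OF s]] in \<open>simp_all add: cadjoint_range\<close>)
  qed
  then show ?thesis
    using that RN by (simp add: N_def)
qed

text \<open>The shifted symbols are \<open>(z U\<^sup>* - z\<^sub>1, U - z\<^sub>2)\<close> on \<open>ran P\<close> and
  \<open>(U\<^sup>* - z\<^sub>1, z U - z\<^sub>2)\<close> on \<open>ran P\<^sup>\<bottom>\<close>; the weights \<open>\<alpha>, \<beta>\<close> cover both blocks.\<close>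

definition bezout_on_range :: "complex \<Rightarrow> complex \<Rightarrow> complex \<Rightarrow> complex \<Rightarrow> bool" where
  "bezout_on_range \<alpha> z1 \<beta> z2 \<longleftrightarrow> (\<exists>X Y. in_commutant X \<and> in_commutant Y \<and>
     (\<forall>s\<in>range Q. X (\<alpha> *\<^sub>C cadjoint U s - z1 *\<^sub>C s) + Y (\<beta> *\<^sub>C U s - z2 *\<^sub>C s) = s))"

lemma bezout_on_rangeI:
  assumes "in_commutant X" "in_commutant Y"
    and "\<And>s. s \<in> range Q \<Longrightarrow> X (\<alpha> *\<^sub>C cadjoint U s - z1 *\<^sub>C s) + Y (\<beta> *\<^sub>C U s - z2 *\<^sub>C s) = s"
  shows "bezout_on_range \<alpha> z1 \<beta> z2"
  using assms unfolding bezout_on_range_def by blast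

lemma bezout_on_range_resolvent:
  assumes "\<beta> \<noteq> 0" and "z2 / \<beta> \<notin> spectrum_on (range Q) U"
  shows "bezout_on_range \<alpha> z1 \<beta> z2"
proof -
  obtain R where R: "in_commutant R" "\<And>s. s \<in> range Q \<Longrightarrow> R (U s - (z2 / \<beta>) *\<^sub>C s) = s"
    using in_commutant_resolvent[OF assms(2)] by blast
  show ?thesis
  proof (rule bezout_on_rangeI[OF in_commutant_zero in_commutant_comp[OF in_commutant_scaleC R(1)]])
    fix s assume s: "s \<in> range Q"
    have "\<beta> *\<^sub>C U s - z2 *\<^sub>C s = \<beta> *\<^sub>C (U s - (z2 / \<beta>) *\<^sub>C s)"
      using \<open>\<beta> \<noteq> 0\<close> by (simp add: scaleC_diff_right scaleC_scaleC)
    then show "0 + (1 / \<beta>) *\<^sub>C R (\<beta> *\<^sub>C U s - z2 *\<^sub>C s) = s"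
      using in_commutantD(3)[OF R(1) shift_range[OF s, of 1 "z2 / \<beta>"]] R(2)[OF s] \<open>\<beta> \<noteq> 0\<close>
      by (simp add: scaleC_one scaleC_scaleC)
  qed
qed

text \<open>For \<open>l = z\<^sub>2/\<beta>\<close> on the unit circle, \<open>U\<^sup>*(\<beta>U - z\<^sub>2) = \<beta> - z\<^sub>2U\<^sup>*\<close> eliminates \<open>U\<^sup>*\<close>
  from \<open>\<alpha>U\<^sup>* - z\<^sub>1\<close>, leaving the scalar \<open>\<alpha> cnj l - z\<^sub>1\<close>.\<close>

lemma bezout_on_range_circle:
  assumes "\<beta> \<noteq> 0" and "cmod (z2 / \<beta>) = 1" and "z1 \<noteq> \<alpha> * cnj (z2 / \<beta>)"
  shows "bezout_on_range \<alpha> z1 \<beta> z2"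
proof -
  define l where "l = z2 / \<beta>"
  define c where "c = \<alpha> * cnj l - z1"
  have "cmod l = 1" "c \<noteq> 0"
    using assms by (simp_all add: l_def c_def)
  then have "l \<noteq> 0" "l * cnj l = 1"
    using complex_norm_square[of l] by auto
  then have "cnj l = 1 / l"
    by (simp add: field_simps mult.commute)
  have "z2 \<noteq> 0" using \<open>l \<noteq> 0\<close> by (auto simp: l_def)
  have "z2 = \<beta> * l"
    using \<open>\<beta> \<noteq> 0\<close> by (simp add: l_def)
  have "(\<alpha> / (z2 * c)) * \<beta> = (\<alpha> * cnj l) / c"
    using \<open>\<beta> \<noteq> 0\<close> \<open>l \<noteq> 0\<close> unfolding \<open>z2 = \<beta> * l\<close> \<open>cnj l = 1 / l\<close> by simp
  then have coeffs: "(\<alpha> / (z2 * c)) * z2 = (1 / c) * \<alpha>" "(\<alpha> / (z2 * c)) * \<beta> - (1 / c) * z1 = 1"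
    using \<open>z2 \<noteq> 0\<close> \<open>c \<noteq> 0\<close> by (simp_all add: c_def diff_divide_distrib[symmetric])
  show ?thesis
  proof (rule bezout_on_rangeI[OF in_commutant_scaleC in_commutant_cadjoint])
    fix s
    have "(1 / c) *\<^sub>C (\<alpha> *\<^sub>C cadjoint U s - z1 *\<^sub>C s) + (\<alpha> / (z2 * c)) *\<^sub>C cadjoint U (\<beta> *\<^sub>C U s - z2 *\<^sub>C s)
        = ((1 / c) * \<alpha>) *\<^sub>C cadjoint U s - ((1 / c) * z1) *\<^sub>C s
          + ((\<alpha> / (z2 * c)) * \<beta>) *\<^sub>C s - ((\<alpha> / (z2 * c)) * z2) *\<^sub>C cadjoint U s"
      by (simp add: cadjoint_diff cadjoint_scaleC U_cancel scaleC_diff_right scaleC_scaleC add_diff_eq)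
    also have "\<dots> = ((\<alpha> / (z2 * c)) * \<beta> - (1 / c) * z1) *\<^sub>C s"
      unfolding coeffs(1) by (simp add: scaleC_diff_left)
    finally show "(1 / c) *\<^sub>C (\<alpha> *\<^sub>C cadjoint U s - z1 *\<^sub>C s) + (\<alpha> / (z2 * c)) *\<^sub>C cadjoint U (\<beta> *\<^sub>C U s - z2 *\<^sub>C s) = s"
      by (simp only: coeffs(2) scaleC_one)
  qed
qed

lemma bezout_on_range_beta_zero:
  assumes "\<alpha> \<noteq> 0" and off: "\<And>l. l \<in> spectrum_on (range Q) U \<Longrightarrow> (z1, z2) \<noteq> (\<alpha> * cnj l, 0)"
  shows "bezout_on_range \<alpha> z1 0 z2"
proof -
  consider "z2 \<noteq> 0" | "z2 = 0" "z1 = 0" | "z2 = 0" "z1 \<noteq> 0" by blast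
  then show ?thesis
  proof cases
    case 1
    show ?thesis
      by (rule bezout_on_rangeI[OF in_commutant_zero in_commutant_scaleC[of "- 1 / z2"]])
        (use 1 in \<open>simp add: scaleC_minus_right scaleC_scaleC scaleC_one\<close>)
  next
    case 2
    show ?thesis
      by (rule bezout_on_rangeI[OF in_commutant_U[of "1 / \<alpha>"] in_commutant_zero])
        (use 2 \<open>\<alpha> \<noteq> 0\<close> in \<open>simp add: U_scaleC U_cancel scaleC_scaleC scaleC_one\<close>)
  next
    case 3
    define m where "m = \<alpha> / z1"
    have "m \<notin> spectrum_on (range Q) U"
    proof
      assume m: "m \<in> spectrum_on (range Q) U"
      then have "cmod \<alpha> = cmod z1"
        using spectrum_on_circle[OF m] \<open>z1 \<noteq> 0\<close> by (simp add: m_def norm_divide)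
      then have "\<alpha> * cnj m = z1"
        using \<open>z1 \<noteq> 0\<close> complex_norm_square[of \<alpha>] complex_norm_square[of z1]
        by (simp add: m_def field_simps)
      then show False using off[OF m] 3 by simp
    qed
    then obtain R where R: "in_commutant R" "\<And>s. s \<in> range Q \<Longrightarrow> R (U s - m *\<^sub>C s) = s"
      using in_commutant_resolvent by blast
    show ?thesis
    proof (rule bezout_on_rangeI[OF in_commutant_comp[OF in_commutant_scaleC
            in_commutant_comp[OF R(1) in_commutant_U[of 1]]] in_commutant_zero])
      fix s assume s: "s \<in> range Q"
      have "1 *\<^sub>C U (\<alpha> *\<^sub>C cadjoint U s - z1 *\<^sub>C s) = (- z1) *\<^sub>C (U s - m *\<^sub>C s)"
        using \<open>z1 \<noteq> 0\<close> by (simp add: U_diff U_scaleC U_cancel scaleC_diff_right scaleC_scaleC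
            scaleC_minus_left scaleC_one m_def)
      then show "(- 1 / z1) *\<^sub>C R (1 *\<^sub>C U (\<alpha> *\<^sub>C cadjoint U s - z1 *\<^sub>C s)) + 0 = s"
        using in_commutantD(3)[OF R(1) shift_range[OF s, of 1 m]] R(2)[OF s] \<open>z1 \<noteq> 0\<close>
        by (simp add: scaleC_one scaleC_scaleC)
    qed
  qed
qed

lemma bezout_on_range_off_spectrum:
  assumes "\<alpha> \<noteq> 0 \<or> \<beta> \<noteq> 0"
    and off: "\<And>l. l \<in> spectrum_on (range Q) U \<Longrightarrow> (z1, z2) \<noteq> (\<alpha> * cnj l, \<beta> * l)"
  shows "bezout_on_range \<alpha> z1 \<beta> z2"
proof (cases "\<beta> = 0")
  case True
  then show ?thesis
    using assms bezout_on_range_beta_zero by simp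
next
  case False
  show ?thesis
  proof (cases "z2 / \<beta> \<in> spectrum_on (range Q) U")
    case True
    then show ?thesis
      using off[OF True] False by (intro bezout_on_range_circle spectrum_on_circle) auto
  qed (use False bezout_on_range_resolvent in blast)
qed

lemma koszul_breaks_on_spectrum:
  assumes l: "l \<in> spectrum_on (range Q) U"
  obtains k where "k \<in> range Q" and "\<And>s t. s \<in> range Q \<Longrightarrow> t \<in> range Q \<Longrightarrow>
     (\<alpha> *\<^sub>C cadjoint U s - (\<alpha> * cnj l) *\<^sub>C s) + (\<beta> *\<^sub>C U t - (\<beta> * l) *\<^sub>C t) \<noteq> k"
proof -
  obtain k where k: "k \<in> range Q" "\<And>w. w \<in> range Q \<Longrightarrow> U w - l *\<^sub>C w \<noteq> k"
    using spectrum_on_not_surj[OF l] by blast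
  have "l * cnj l = 1"
    using spectrum_on_circle[OF l] complex_norm_square[of l] by simp
  show ?thesis
  proof (rule that[OF k(1)])
    fix s t assume s: "s \<in> range Q" and t: "t \<in> range Q"
    define w where "w = (- (\<alpha> * cnj l)) *\<^sub>C cadjoint U s + \<beta> *\<^sub>C t"
    have "w \<in> range Q"
      unfolding w_def using csubspace_range s t
      by (simp add: csubspace_add csubspace_scaleC cadjoint_range)
    moreover have "U w - l *\<^sub>C w
        = (\<alpha> *\<^sub>C cadjoint U s - (\<alpha> * cnj l) *\<^sub>C s) + (\<beta> *\<^sub>C U t - (\<beta> * l) *\<^sub>C t)"
    proof -
      have "U w = (- (\<alpha> * cnj l)) *\<^sub>C s + \<beta> *\<^sub>C U t"
        by (simp add: w_def U_add U_scaleC U_cancel)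
      moreover have "l *\<^sub>C w = (- \<alpha>) *\<^sub>C cadjoint U s + (\<beta> * l) *\<^sub>C t"
        using \<open>l * cnj l = 1\<close>
        by (simp add: w_def scaleC_add_right scaleC_scaleC mult.commute mult.left_commute)
      ultimately show ?thesis
        by (simp add: scaleC_minus_left algebra_simps)
    qed
    ultimately show "(\<alpha> *\<^sub>C cadjoint U s - (\<alpha> * cnj l) *\<^sub>C s) + (\<beta> *\<^sub>C U t - (\<beta> * l) *\<^sub>C t) \<noteq> k"
      using k(2) by metis
  qed
qed

end

section \<open>Koszul complexes of the BCL symbols\<close>

lemma koszul_exact_of_bezout:
  fixes A B X Y :: "'e::complex_inner \<Rightarrow> 'e"
  assumes A_add: "\<And>x y. A (x + y) = A x + A y" and B_add: "\<And>x y. B (x + y) = B x + B y"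
    and AB: "\<And>x. A (B x) = B (A x)"
    and X_add: "\<And>x y. X (x + y) = X x + X y" and Y_add: "\<And>x y. Y (x + y) = Y x + Y y"
    and XA: "\<And>x. A (X x) = X (A x)" and YA: "\<And>x. A (Y x) = Y (A x)"
    and XB: "\<And>x. B (X x) = X (B x)" and YB: "\<And>x. B (Y x) = Y (B x)"
    and bezout: "\<And>x. X (A x) + Y (B x) = x"
  shows "koszul_exact A B"
  unfolding koszul_exact_def
proof (intro conjI)
  have zero: "A 0 = 0" "B 0 = 0" "X 0 = 0" "Y 0 = 0"
    using A_add[of 0 0] B_add[of 0 0] X_add[of 0 0] Y_add[of 0 0] by simp_all
  show "{h. (A h, B h) = (0, 0)} = {0}"
  proof (intro set_eqI iffI)
    fix h assume "h \<in> {h. (A h, B h) = (0, 0)}"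
    then show "h \<in> {0}" using bezout[of h] zero by simp
  qed (use zero in simp)
  show "{(h1, h2). A h2 - B h1 = 0} = (\<lambda>h. (A h, B h)) ` UNIV"
  proof (intro set_eqI iffI)
    fix p assume "p \<in> {(h1, h2). A h2 - B h1 = 0}"
    then obtain h1 h2 where p: "p = (h1, h2)" and "A h2 = B h1" by auto
    then have "A (X h1 + Y h2) = h1" "B (X h1 + Y h2) = h2"
      using bezout[of h1] bezout[of h2] by (simp_all add: A_add B_add XA YA XB YB add.commute)
    then show "p \<in> (\<lambda>h. (A h, B h)) ` UNIV"
      using p by (intro image_eqI[of _ _ "X h1 + Y h2"]) simp_all
  qed (use AB in auto)
  have "B (- x) = - B x" for x
    using B_add[of x "- x"] zero by (simp add: eq_neg_iff_add_eq_0 add.commute)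
  then have "A (X k) - B (- Y k) = k" for k
    using bezout[of k] by (simp add: XA YB)
  then have "k \<in> (\<lambda>(h1, h2). A h2 - B h1) ` UNIV" for k
    by (intro image_eqI[of _ _ "(- Y k, X k)"]) simp_all
  then show "(\<lambda>(h1, h2). A h2 - B h1) ` UNIV = UNIV"
    by blast
qed

lemma not_koszul_exact_if_breaks:
  fixes A B :: "'e::complex_inner \<Rightarrow> 'e"
  assumes B_add: "\<And>x y. B (x + y) = B x + B y" and "koszul_breaks_stage3 A B"
  shows "\<not> koszul_exact A B"
proof
  assume "koszul_exact A B"
  have "B (- x) = - B x" for x
    using B_add[of x "- x"] B_add[of 0 0] by (simp add: eq_neg_iff_add_eq_0 add.commute)
  have "k \<in> {A x + B y | x y. True}" for k
  proof -
    have "k \<in> (\<lambda>(h1, h2). A h2 - B h1) ` UNIV"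
      using \<open>koszul_exact A B\<close> unfolding koszul_exact_def by blast
    then obtain h1 h2 where "k = A h2 - B h1" by auto
    then have "k = A h2 + B (- h1)"
      using \<open>B (- h1) = - B h1\<close> by simp
    then show ?thesis by blast
  qed
  with \<open>koszul_breaks_stage3 A B\<close> show False
    unfolding koszul_breaks_stage3_def by blast
qed

lemma spectrum_on_zero_space:
  assumes "bounded_clinear (T::'a::complex_inner \<Rightarrow> 'a)"
  shows "spectrum_on {0} T = {}"
  using bounded_clinear_zero[OF assms] unfolding spectrum_on_def
  by (auto intro!: exI[of _ "\<lambda>x. 0"])

locale bcl_blocks =
  fixes P U :: "'e::complex_hilbert \<Rightarrow> 'e" and z :: complex
  assumes projection: "projection P" and unitary: "unitary U" and commute: "\<And>e. P (U e) = U (P e)"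
begin

lemmas P_add = bounded_clinear_add[OF projection_bounded_clinear[OF projection]]
  and P_scaleC = bounded_clinear_scaleC[OF projection_bounded_clinear[OF projection]]
  and P_diff = bounded_clinear_diff[OF projection_bounded_clinear[OF projection]]
  and P_idem = projection_idem[OF projection]
  and P_complement = projection_complement[OF projection]
  and U_zero = bounded_clinear_zero[OF unitary_bounded_clinear[OF unitary]]
  and cadjoint_zero = bounded_clinear_zero[OF cadjoint_unitary_bounded_clinear[OF unitary]]

lemma complement_bounded_clinear: "bounded_clinear (\<lambda>x. x - P x)"
  unfolding bounded_clinear_def
proof (intro conjI allI exI)
  show "x + y - P (x + y) = x - P x + (y - P y)" for x y
    by (simp add: P_add algebra_simps)
  show "c *\<^sub>C x - P (c *\<^sub>C x) = c *\<^sub>C (x - P x)" for c x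
    by (simp add: P_scaleC scaleC_diff_right)
  show "norm (x - P x) \<le> norm x * 1" for x
    using power2_norm_projection[OF projection, of x] by (simp add: power2_le_imp_le)
qed

sublocale range_P: unitary_reducing U P
  by unfold_locales (simp_all add: unitary projection_bounded_clinear[OF projection] commute P_idem)

sublocale range_P_perp: unitary_reducing U "\<lambda>x. x - P x"
  by unfold_locales
    (simp_all add: unitary complement_bounded_clinear P_complement commute range_P.U_diff P_diff P_idem)

lemmas reduces_ranges = range_P.reduces_range range_P_perp.reduces_range

lemma range_P_iff: "s \<in> range P \<longleftrightarrow> P s = s"
  by (rule range_P.range_iff)

lemma range_P_perp_iff: "s \<in> range (\<lambda>x. x - P x) \<longleftrightarrow> P s = 0"
  using range_P_perp.range_iff[of s] by auto

lemma phi1_eq: "bcl_phi1 P U z x = z *\<^sub>C cadjoint U (P x) + cadjoint U (x - P x)"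
  by (simp add: bcl_phi1_def range_P.cadjoint_add range_P.cadjoint_scaleC add.commute)

lemma phi2_eq: "bcl_phi2 P U z x = U (P x) + z *\<^sub>C U (x - P x)"
  by (simp add: bcl_phi2_def commute range_P.U_diff)

lemma phi1_on_range_P: "P s = s \<Longrightarrow> bcl_phi1 P U z s = z *\<^sub>C cadjoint U s"
  and phi1_on_range_P_perp: "P s = 0 \<Longrightarrow> bcl_phi1 P U z s = cadjoint U s"
  and phi2_on_range_P: "P s = s \<Longrightarrow> bcl_phi2 P U z s = U s"
  and phi2_on_range_P_perp: "P s = 0 \<Longrightarrow> bcl_phi2 P U z s = z *\<^sub>C U s"
  by (simp_all add: phi1_eq phi2_eq cadjoint_zero U_zero)

lemma phi1_add: "bcl_phi1 P U z (x + y) = bcl_phi1 P U z x + bcl_phi1 P U z y"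
  and phi2_add: "bcl_phi2 P U z (x + y) = bcl_phi2 P U z x + bcl_phi2 P U z y"
  and phi1_scaleC: "bcl_phi1 P U z (c *\<^sub>C x) = c *\<^sub>C bcl_phi1 P U z x"
  and phi2_scaleC: "bcl_phi2 P U z (c *\<^sub>C x) = c *\<^sub>C bcl_phi2 P U z x"
  by (simp_all add: phi1_eq phi2_eq P_add P_scaleC range_P.cadjoint_add range_P.cadjoint_diff
      range_P.cadjoint_scaleC range_P.U_add range_P.U_diff range_P.U_scaleC scaleC_add_right
      scaleC_diff_right scaleC_scaleC mult.commute algebra_simps)

lemma phi1_diff: "bcl_phi1 P U z (x - y) = bcl_phi1 P U z x - bcl_phi1 P U z y"
  and phi2_diff: "bcl_phi2 P U z (x - y) = bcl_phi2 P U z x - bcl_phi2 P U z y"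
  using phi1_add[of "x - y" y] phi2_add[of "x - y" y] by simp_all

lemma P_phi1: "P (bcl_phi1 P U z x) = bcl_phi1 P U z (P x)"
  and P_phi2: "P (bcl_phi2 P U z x) = bcl_phi2 P U z (P x)"
  by (simp_all add: phi1_eq phi2_eq P_add P_scaleC P_diff P_idem range_P.commute_cadjoint commute
      cadjoint_zero U_zero)

lemma phi1_phi2: "bcl_phi1 P U z (bcl_phi2 P U z x) = z *\<^sub>C x"
proof -
  have "P (bcl_phi2 P U z x) = U (P x)"
    by (simp add: P_phi2 phi2_on_range_P P_idem)
  moreover have "bcl_phi2 P U z x - U (P x) = z *\<^sub>C U (x - P x)"
    by (simp add: phi2_eq)
  ultimately have "bcl_phi1 P U z (bcl_phi2 P U z x) = z *\<^sub>C cadjoint U (U (P x)) + cadjoint U (z *\<^sub>C U (x - P x))"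
    by (simp only: phi1_eq)
  then show ?thesis
    by (simp add: range_P.U_cancel range_P.cadjoint_scaleC flip: scaleC_add_right)
qed

lemma phi2_phi1: "bcl_phi2 P U z (bcl_phi1 P U z x) = z *\<^sub>C x"
proof -
  have "P (bcl_phi1 P U z x) = z *\<^sub>C cadjoint U (P x)"
    by (simp add: P_phi1 phi1_on_range_P P_idem)
  moreover have "bcl_phi1 P U z x - z *\<^sub>C cadjoint U (P x) = cadjoint U (x - P x)"
    by (simp add: phi1_eq)
  ultimately have "bcl_phi2 P U z (bcl_phi1 P U z x) = U (z *\<^sub>C cadjoint U (P x)) + z *\<^sub>C U (cadjoint U (x - P x))"
    by (simp only: phi2_eq)
  then show ?thesis
    by (simp add: range_P.U_cancel range_P.U_scaleC flip: scaleC_add_right)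
qed

definition phi1_minus :: "complex \<Rightarrow> 'e \<Rightarrow> 'e" where
  "phi1_minus z1 = (\<lambda>x. bcl_phi1 P U z x - z1 *\<^sub>C x)"

definition phi2_minus :: "complex \<Rightarrow> 'e \<Rightarrow> 'e" where
  "phi2_minus z2 = (\<lambda>x. bcl_phi2 P U z x - z2 *\<^sub>C x)"

lemma phi_minus_add:
  "phi1_minus z1 (x + y) = phi1_minus z1 x + phi1_minus z1 y"
  "phi2_minus z2 (x + y) = phi2_minus z2 x + phi2_minus z2 y"
  by (simp_all add: phi1_minus_def phi2_minus_def phi1_add phi2_add scaleC_add_right algebra_simps)

lemma phi_minus_diff:
  "phi1_minus z1 (x - y) = phi1_minus z1 x - phi1_minus z1 y"
  "phi2_minus z2 (x - y) = phi2_minus z2 x - phi2_minus z2 y"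
  using phi_minus_add(1)[of z1 "x - y" y] phi_minus_add(2)[of z2 "x - y" y] by simp_all

lemma P_phi_minus:
  "P (phi1_minus z1 x) = phi1_minus z1 (P x)"
  "P (phi2_minus z2 x) = phi2_minus z2 (P x)"
  by (simp_all add: phi1_minus_def phi2_minus_def P_diff P_scaleC P_phi1 P_phi2)

lemma phi_minus_on_range_P:
  "P s = s \<Longrightarrow> phi1_minus z1 s = z *\<^sub>C cadjoint U s - z1 *\<^sub>C s"
  "P s = s \<Longrightarrow> phi2_minus z2 s = 1 *\<^sub>C U s - z2 *\<^sub>C s"
  by (simp_all add: phi1_minus_def phi2_minus_def phi1_on_range_P phi2_on_range_P scaleC_one)

lemma phi_minus_on_range_P_perp:
  "P s = 0 \<Longrightarrow> phi1_minus z1 s = 1 *\<^sub>C cadjoint U s - z1 *\<^sub>C s"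
  "P s = 0 \<Longrightarrow> phi2_minus z2 s = z *\<^sub>C U s - z2 *\<^sub>C s"
  by (simp_all add: phi1_minus_def phi2_minus_def phi1_on_range_P_perp phi2_on_range_P_perp scaleC_one)

lemma phi_minus_commute: "phi1_minus z1 (phi2_minus z2 x) = phi2_minus z2 (phi1_minus z1 x)"
  by (simp add: phi1_minus_def phi2_minus_def phi1_diff phi2_diff phi1_scaleC phi2_scaleC
      phi1_phi2 phi2_phi1 scaleC_diff_right scaleC_scaleC mult.commute algebra_simps)

lemma glued_commutes:
  assumes X1: "range_P.in_commutant X1" and X2: "range_P_perp.in_commutant X2"
  defines "X \<equiv> \<lambda>x. X1 (P x) + X2 (x - P x)"
  shows "X (x + y) = X x + X y"
    and "phi1_minus z1 (X x) = X (phi1_minus z1 x)"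
    and "phi2_minus z2 (X x) = X (phi2_minus z2 x)"
proof -
  have in1: "P x \<in> range P" and in2: "x - P x \<in> range (\<lambda>x. x - P x)" for x
    by auto
  note X1D = range_P.in_commutantD[OF X1 in1] and X2D = range_P_perp.in_commutantD[OF X2 in2]
  have P1: "P (X1 (P x)) = X1 (P x)" and P2: "P (X2 (x - P x)) = 0" for x
    using X1D(1) X2D(1) by (simp_all only: range_P_iff range_P_perp_iff)
  have split: "x + y - P (x + y) = (x - P x) + (y - P y)"
    by (simp add: P_add algebra_simps)
  show "X (x + y) = X x + X y"
    unfolding X_def split unfolding P_add
    by (simp only: X1D(2)[OF in1] X2D(2)[OF in2] in1 in2 add_ac)
  have "P (phi1_minus z1 x) = phi1_minus z1 (P x)" "phi1_minus z1 x - P (phi1_minus z1 x) = phi1_minus z1 (x - P x)"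
    by (simp_all add: P_phi_minus phi_minus_diff)
  then show "phi1_minus z1 (X x) = X (phi1_minus z1 x)"
    using P1[of x] P2[of x]
    by (simp add: X_def phi_minus_add phi_minus_on_range_P phi_minus_on_range_P_perp P_idem P_complement
        range_P.in_commutant_shift[OF X1 in1] range_P_perp.in_commutant_shift[OF X2 in2])
  have "P (phi2_minus z2 x) = phi2_minus z2 (P x)" "phi2_minus z2 x - P (phi2_minus z2 x) = phi2_minus z2 (x - P x)"
    by (simp_all add: P_phi_minus phi_minus_diff)
  then show "phi2_minus z2 (X x) = X (phi2_minus z2 x)"
    using P1[of x] P2[of x]
    by (simp add: X_def phi_minus_add phi_minus_on_range_P phi_minus_on_range_P_perp P_idem P_complement
        range_P.in_commutant_shift[OF X1 in1] range_P_perp.in_commutant_shift[OF X2 in2])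
qed

lemma koszul_exact_of_block_bezouts:
  assumes "range_P.bezout_on_range z z1 1 z2" and "range_P_perp.bezout_on_range 1 z1 z z2"
  shows "koszul_exact (phi1_minus z1) (phi2_minus z2)"
proof -
  obtain X1 Y1 where X1: "range_P.in_commutant X1" and Y1: "range_P.in_commutant Y1"
    and bezout1: "\<And>s. s \<in> range P \<Longrightarrow> X1 (z *\<^sub>C cadjoint U s - z1 *\<^sub>C s) + Y1 (1 *\<^sub>C U s - z2 *\<^sub>C s) = s"
    using assms(1) unfolding range_P.bezout_on_range_def by blast
  obtain X2 Y2 where X2: "range_P_perp.in_commutant X2" and Y2: "range_P_perp.in_commutant Y2"
    and bezout2: "\<And>s. s \<in> range (\<lambda>x. x - P x) \<Longrightarrow>
      X2 (1 *\<^sub>C cadjoint U s - z1 *\<^sub>C s) + Y2 (z *\<^sub>C U s - z2 *\<^sub>C s) = s"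
    using assms(2) unfolding range_P_perp.bezout_on_range_def by blast
  have bezout: "X1 (P (phi1_minus z1 x)) + X2 (phi1_minus z1 x - P (phi1_minus z1 x))
      + (Y1 (P (phi2_minus z2 x)) + Y2 (phi2_minus z2 x - P (phi2_minus z2 x))) = x" for x
  proof -
    have blocks: "P (phi1_minus z1 x) = z *\<^sub>C cadjoint U (P x) - z1 *\<^sub>C P x"
      "P (phi2_minus z2 x) = 1 *\<^sub>C U (P x) - z2 *\<^sub>C P x"
      "phi1_minus z1 x - P (phi1_minus z1 x) = 1 *\<^sub>C cadjoint U (x - P x) - z1 *\<^sub>C (x - P x)"
      "phi2_minus z2 x - P (phi2_minus z2 x) = z *\<^sub>C U (x - P x) - z2 *\<^sub>C (x - P x)"
      by (simp_all only: P_phi_minus phi_minus_diff[symmetric])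
        (simp_all add: phi_minus_on_range_P phi_minus_on_range_P_perp P_idem P_complement)
    have "P x \<in> range P" "x - P x \<in> range (\<lambda>x. x - P x)" by auto
    then have "(X1 (z *\<^sub>C cadjoint U (P x) - z1 *\<^sub>C P x) + Y1 (1 *\<^sub>C U (P x) - z2 *\<^sub>C P x))
        + (X2 (1 *\<^sub>C cadjoint U (x - P x) - z1 *\<^sub>C (x - P x)) + Y2 (z *\<^sub>C U (x - P x) - z2 *\<^sub>C (x - P x)))
        = x"
      using bezout1 bezout2 by simp
    then show ?thesis
      unfolding blocks(3,4) unfolding blocks(1,2) by (simp only: add_ac)
  qed
  note X = glued_commutes[OF X1 X2] and Y = glued_commutes[OF Y1 Y2]
  show ?thesis
    by (rule koszul_exact_of_bezout[where X = "\<lambda>x. X1 (P x) + X2 (x - P x)"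
          and Y = "\<lambda>x. Y1 (P x) + Y2 (x - P x)", OF phi_minus_add phi_minus_commute X(1) Y(1) X(2)
          Y(2) X(3) Y(3) bezout])
qed

lemma koszul_breaks_range_P:
  assumes "l \<in> spectrum_on (range P) U"
  shows "koszul_breaks_stage3 (phi1_minus (z * cnj l)) (phi2_minus l)"
  unfolding koszul_breaks_stage3_def
proof
  obtain k where "k \<in> range P" and not_hit: "\<And>s t. s \<in> range P \<Longrightarrow> t \<in> range P \<Longrightarrow>
      (z *\<^sub>C cadjoint U s - (z * cnj l) *\<^sub>C s) + (1 *\<^sub>C U t - (1 * l) *\<^sub>C t) \<noteq> k"
    using range_P.koszul_breaks_on_spectrum[OF assms] by blast
  assume "{phi1_minus (z * cnj l) x + phi2_minus l y |x y. True} = UNIV"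
  then obtain x y where "k = phi1_minus (z * cnj l) x + phi2_minus l y" by blast
  moreover have "P k = k"
    using \<open>k \<in> range P\<close> range_P_iff by blast
  ultimately have "k = phi1_minus (z * cnj l) (P x) + phi2_minus l (P y)"
    by (simp add: P_add P_phi_minus)
  then show False
    using not_hit[of "P x" "P y"] by (simp add: phi_minus_on_range_P P_idem)
qed

lemma koszul_breaks_range_P_perp:
  assumes "m \<in> spectrum_on (range (\<lambda>x. x - P x)) U"
  shows "koszul_breaks_stage3 (phi1_minus (cnj m)) (phi2_minus (z * m))"
  unfolding koszul_breaks_stage3_def
proof
  obtain k where "k \<in> range (\<lambda>x. x - P x)" and not_hit: "\<And>s t. s \<in> range (\<lambda>x. x - P x) \<Longrightarrow>
      t \<in> range (\<lambda>x. x - P x) \<Longrightarrow>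
      (1 *\<^sub>C cadjoint U s - (1 * cnj m) *\<^sub>C s) + (z *\<^sub>C U t - (z * m) *\<^sub>C t) \<noteq> k"
    using range_P_perp.koszul_breaks_on_spectrum[OF assms] by blast
  assume "{phi1_minus (cnj m) x + phi2_minus (z * m) y |x y. True} = UNIV"
  then obtain x y where "k = phi1_minus (cnj m) x + phi2_minus (z * m) y" by blast
  moreover have "P k = 0"
    using \<open>k \<in> range (\<lambda>x. x - P x)\<close> range_P_perp_iff by blast
  ultimately have "k = phi1_minus (cnj m) (x - P x) + phi2_minus (z * m) (y - P y)"
    by (simp add: P_add P_phi_minus phi_minus_diff algebra_simps)
  then show False
    using not_hit[of "x - P x" "y - P y"] by (simp add: phi_minus_on_range_P_perp P_complement)
qed

lemma taylor_spectrum_bcl_phi: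
  "taylor_spectrum (bcl_phi1 P U z) (bcl_phi2 P U z) =
      {(z * cnj l, l) | l. l \<in> spectrum_on (range P) U}
    \<union> {(cnj m, z * m) | m. m \<in> spectrum_on (range (\<lambda>x. x - P x)) U}" (is "?T = ?S1 \<union> ?S2")
  and koszul_breaks_on_taylor_spectrum:
    "\<forall>(z1, z2) \<in> taylor_spectrum (bcl_phi1 P U z) (bcl_phi2 P U z).
      koszul_breaks_stage3 (\<lambda>x. bcl_phi1 P U z x - z1 *\<^sub>C x) (\<lambda>x. bcl_phi2 P U z x - z2 *\<^sub>C x)"
proof -
  have T: "(z1, z2) \<in> ?T \<longleftrightarrow> \<not> koszul_exact (phi1_minus z1) (phi2_minus z2)" for z1 z2
    by (simp add: taylor_spectrum_def phi1_minus_def phi2_minus_def)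
  have breaks: "koszul_breaks_stage3 (phi1_minus z1) (phi2_minus z2)" if "(z1, z2) \<in> ?S1 \<union> ?S2" for z1 z2
    using that koszul_breaks_range_P koszul_breaks_range_P_perp by blast
  have exact: "koszul_exact (phi1_minus z1) (phi2_minus z2)" if "(z1, z2) \<notin> ?S1 \<union> ?S2" for z1 z2
    using that
    by (intro koszul_exact_of_block_bezouts range_P.bezout_on_range_off_spectrum
        range_P_perp.bezout_on_range_off_spectrum) auto
  show "?T = ?S1 \<union> ?S2"
  proof (intro set_eqI)
    fix p :: "complex \<times> complex"
    obtain z1 z2 where p: "p = (z1, z2)" by (cases p)
    show "p \<in> ?T \<longleftrightarrow> p \<in> ?S1 \<union> ?S2"
      unfolding p T using exact[of z1 z2] not_koszul_exact_if_breaks[OF phi_minus_add(2) breaks[of z1 z2]]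
      by blast
  qed
  then show "\<forall>(z1, z2) \<in> ?T. koszul_breaks_stage3 (\<lambda>x. bcl_phi1 P U z x - z1 *\<^sub>C x)
      (\<lambda>x. bcl_phi2 P U z x - z2 *\<^sub>C x)"
    using breaks unfolding phi1_minus_def phi2_minus_def by blast
qed

end

theorem lemma2p8:
  fixes V1 V2 :: "'h::complex_hilbert \<Rightarrow> 'h"
    and P U :: "'e::complex_hilbert \<Rightarrow> 'e"
  assumes "isometry V1" and "isometry V2" and "V1 \<circ> V2 = V2 \<circ> V1"
    and "\<forall>x. defect V1 V2 x = 0"
    and "\<exists>x. x \<noteq> 0 \<and> cadjoint (V1 \<circ> V2) x = 0"
    and "bcl_triple V1 V2 P U"
  shows "reduces (range P) U \<and> reduces (range (\<lambda>x. x - P x)) U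
    \<and> (\<forall>z. norm z < 1 \<longrightarrow>
      taylor_spectrum (bcl_phi1 P U z) (bcl_phi2 P U z) =
        (if unitary V2 then {(z * cnj l, l) | l. l \<in> spectrum_on (range P) U}
         else if unitary V1 then {(cnj m, z * m) | m. m \<in> spectrum_on (range (\<lambda>x. x - P x)) U}
         else {(z * cnj l, l) | l. l \<in> spectrum_on (range P) U}
              \<union> {(cnj m, z * m) | m. m \<in> spectrum_on (range (\<lambda>x. x - P x)) U})
      \<and> (\<forall>(z1, z2) \<in> taylor_spectrum (bcl_phi1 P U z) (bcl_phi2 P U z).
           koszul_breaks_stage3 (\<lambda>x. bcl_phi1 P U z x - z1 *\<^sub>C x)
                                (\<lambda>x. bcl_phi2 P U z x - z2 *\<^sub>C x)))"
proof -
  \<comment> \<open>Commutativity of \<open>V\<^sub>1, V\<^sub>2\<close> is built into the model, and for \<open>\<E> = {0}\<close> both sides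
    are empty.\<close>
  obtain Hp Hu W where model: "bcl_model V1 V2 P U Hp Hu W"
    using bcl_triple_model[OF assms(1,2,6)] by blast
  have "projection P" "unitary U"
    using assms(6) by (simp_all add: bcl_triple_def)
  then have blocks: "bcl_blocks P U"
    using bcl_model.P_U_commute[OF model assms(4)] by (simp add: bcl_blocks_def)
  have no_spectrum: "spectrum_on {0} U = {}"
    by (rule spectrum_on_zero_space[OF unitary_bounded_clinear[OF \<open>unitary U\<close>]])
  have "range (\<lambda>x. x - P x) = {0}" if "unitary V2"
    using bcl_model.unitary_V2_imp_P_id[OF model that] by auto
  moreover have "range P = {0}" if "unitary V1"
    using bcl_model.unitary_V1_imp_P_zero[OF model that assms(4)] by auto
  ultimately show ?thesis
    using bcl_blocks.reduces_ranges[OF blocks] bcl_blocks.taylor_spectrum_bcl_phi[OF blocks]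
      bcl_blocks.koszul_breaks_on_taylor_spectrum[OF blocks] no_spectrum
    by simp
qed

end
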